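(* Let $n\geq 5$ and let $(\mu_0^n,\cdot,[-,-])$ be a transposed Poisson algebra structure on the associative algebra $\mu_0^n$. Then it is isomorphic to one of the following pairwise non-isomorphic algebras: $\mathbf{TP}(1,0,\dots,0)$; $\mathbf{TP}(0,\alpha,0,\dots,0)$ with $\alpha\in\mathbb{C}$; and, for $4\leq s\leq n$, the algebra $\mathbf{TP}(\alpha_2,\dots,\alpha_n)$ with $\alpha_s=1$, $\alpha_{2s-3}=\alpha\in\mathbb{C}$ (this entry being present only when $2s-3\leq n$), and all other $\alpha_i=0$.
   Context: $\mu_0^n$ is the complex commutative associative algebra with basis $\{e_1,\dots,e_n\}$ and $e_i\cdot e_j=e_{i+j}$ for $2\leq i+j\leq n$, other products zero. A transposed Poisson algebra is a triple $(\mathfrak{L},\cdot,[-,-])$ with $(\mathfrak{L},\cdot)$ commutative associative, $(\mathfrak{L},[-,-])$ a Lie algebra, and $2z\cdot[x,y]=[z\cdot x,y]+[x,z\cdot y]$ for all $x,y,z$. For $\alpha_2,\dots,\alpha_n\in\mathbb{C}$, $\mathbf{TP}(\alpha_2,\dots,\alpha_n)$ denotes $\mu_0^n$ with its associative product together with the bracket $[e_i,e_j]=(j-i)\sum_{t=i+j-1}^{n}\alpha_{t-i-j+3}e_t$ for $3\leq i+j\leq n+1$, all other brackets of basis elements zero. An isomorphism of transposed Poisson algebras is a linear bijection preserving both operations. *)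

theory Defs
  imports Complex_Main "HOL-Library.Function_Algebras"
begin

text \<open>Vectors of the n-dimensional space with basis e_1..e_n are functions
  nat => complex supported in {1..n}; the coordinate k is the e_k-coefficient.\<close>

definition vec_carrier :: "nat \<Rightarrow> (nat \<Rightarrow> complex) set" where
  "vec_carrier n = {v. \<forall>k. k \<notin> {1..n} \<longrightarrow> v k = 0}"

definition scal :: "complex \<Rightarrow> (nat \<Rightarrow> complex) \<Rightarrow> (nat \<Rightarrow> complex)" where
  "scal a v = (\<lambda>k. a * v k)"

text \<open>The associative product of mu_0^n: e_i e_j = e_(i+j) if i+j <= n, else 0.\<close>
definition mu0 :: "nat \<Rightarrow> (nat \<Rightarrow> complex) \<Rightarrow> (nat \<Rightarrow> complex) \<Rightarrow> (nat \<Rightarrow> complex)" where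
  "mu0 n x y = (\<lambda>k. if 2 \<le> k \<and> k \<le> n then (\<Sum>i=1..k-1. x i * y (k - i)) else 0)"

definition linear_on :: "nat \<Rightarrow> ((nat \<Rightarrow> complex) \<Rightarrow> (nat \<Rightarrow> complex)) \<Rightarrow> bool" where
  "linear_on n f \<longleftrightarrow>
     (\<forall>x\<in>vec_carrier n. f x \<in> vec_carrier n) \<and>
     (\<forall>a x y. x \<in> vec_carrier n \<longrightarrow> y \<in> vec_carrier n \<longrightarrow>
        f (scal a x + y) = scal a (f x) + f y)"

definition bilinear_on :: "nat \<Rightarrow> ((nat \<Rightarrow> complex) \<Rightarrow> (nat \<Rightarrow> complex) \<Rightarrow> (nat \<Rightarrow> complex)) \<Rightarrow> bool" where
  "bilinear_on n b \<longleftrightarrow>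
     (\<forall>x\<in>vec_carrier n. \<forall>y\<in>vec_carrier n. b x y \<in> vec_carrier n) \<and>
     (\<forall>a x y z. x \<in> vec_carrier n \<longrightarrow> y \<in> vec_carrier n \<longrightarrow> z \<in> vec_carrier n \<longrightarrow>
        b (scal a x + y) z = scal a (b x z) + b y z \<and>
        b z (scal a x + y) = scal a (b z x) + b z y)"

definition is_TP :: "nat \<Rightarrow> ((nat \<Rightarrow> complex) \<Rightarrow> (nat \<Rightarrow> complex) \<Rightarrow> (nat \<Rightarrow> complex))
    \<Rightarrow> ((nat \<Rightarrow> complex) \<Rightarrow> (nat \<Rightarrow> complex) \<Rightarrow> (nat \<Rightarrow> complex)) \<Rightarrow> bool" where
  "is_TP n m br \<longleftrightarrow>
     bilinear_on n m \<and> bilinear_on n br \<and>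
     (\<forall>x\<in>vec_carrier n. \<forall>y\<in>vec_carrier n. m x y = m y x) \<and>
     (\<forall>x\<in>vec_carrier n. \<forall>y\<in>vec_carrier n. \<forall>z\<in>vec_carrier n. m (m x y) z = m x (m y z)) \<and>
     (\<forall>x\<in>vec_carrier n. br x x = 0) \<and>
     (\<forall>x\<in>vec_carrier n. \<forall>y\<in>vec_carrier n. \<forall>z\<in>vec_carrier n.
        br x (br y z) + br y (br z x) + br z (br x y) = 0) \<and>
     (\<forall>x\<in>vec_carrier n. \<forall>y\<in>vec_carrier n. \<forall>z\<in>vec_carrier n.
        scal 2 (m z (br x y)) = br (m z x) y + br x (m z y))"

definition TP_iso :: "nat
    \<Rightarrow> ((nat \<Rightarrow> complex) \<Rightarrow> (nat \<Rightarrow> complex) \<Rightarrow> (nat \<Rightarrow> complex))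
    \<Rightarrow> ((nat \<Rightarrow> complex) \<Rightarrow> (nat \<Rightarrow> complex) \<Rightarrow> (nat \<Rightarrow> complex))
    \<Rightarrow> ((nat \<Rightarrow> complex) \<Rightarrow> (nat \<Rightarrow> complex) \<Rightarrow> (nat \<Rightarrow> complex))
    \<Rightarrow> ((nat \<Rightarrow> complex) \<Rightarrow> (nat \<Rightarrow> complex) \<Rightarrow> (nat \<Rightarrow> complex)) \<Rightarrow> bool" where
  "TP_iso n m1 b1 m2 b2 \<longleftrightarrow>
     (\<exists>\<phi>. linear_on n \<phi> \<and> bij_betw \<phi> (vec_carrier n) (vec_carrier n) \<and>
        (\<forall>x\<in>vec_carrier n. \<forall>y\<in>vec_carrier n.
           \<phi> (m1 x y) = m2 (\<phi> x) (\<phi> y) \<and> \<phi> (b1 x y) = b2 (\<phi> x) (\<phi> y)))"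

text \<open>Bracket of TP(alpha_2,...,alpha_n) on basis elements:
  [e_i,e_j] = (j-i) * sum_{t=i+j-1}^n alpha_(t-i-j+3) e_t for 3 <= i+j <= n+1.
  Only alpha 2, ..., alpha n are used.\<close>
definition tp_basis :: "nat \<Rightarrow> (nat \<Rightarrow> complex) \<Rightarrow> nat \<Rightarrow> nat \<Rightarrow> nat \<Rightarrow> complex" where
  "tp_basis n \<alpha> i j t =
     (if 3 \<le> i + j \<and> i + j \<le> n + 1 \<and> i + j - 1 \<le> t \<and> t \<le> n
      then of_int (int j - int i) * \<alpha> (t + 3 - (i + j)) else 0)"

definition tp_bracket :: "nat \<Rightarrow> (nat \<Rightarrow> complex) \<Rightarrow> (nat \<Rightarrow> complex) \<Rightarrow> (nat \<Rightarrow> complex) \<Rightarrow> (nat \<Rightarrow> complex)" where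
  "tp_bracket n \<alpha> x y = (\<lambda>t. \<Sum>i=1..n. \<Sum>j=1..n. x i * y j * tp_basis n \<alpha> i j t)"

definition TP_params :: "nat \<Rightarrow> (nat \<Rightarrow> complex) set" where
  "TP_params n =
     {(\<lambda>k. if k = 2 then 1 else 0)}
     \<union> {(\<lambda>k. if k = 3 then a else 0) | a. True}
     \<union> {(\<lambda>k. if k = s then 1 else if k = 2 * s - 3 \<and> 2 * s - 3 \<le> n then a else 0) | s a.
          4 \<le> s \<and> s \<le> n}"

end

theory Submission
  imports Defs "HOL-Computational_Algebra.Formal_Power_Series"
begin

text \<open>Identify \<open>\<mu>\<^sub>0\<^sup>n\<close> with \<open>X \<complex>[[X]] / (X\<^sup>n\<^sup>+\<^sup>1)\<close> via \<open>e\<^sub>k \<mapsto> X\<^sup>k\<close>. The bracket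
  of \<open>TP(\<alpha>)\<close> becomes \<open>[f, g] = V (f g' - f' g)\<close> with \<open>V = \<Sum>\<^sub>k \<alpha>\<^sub>k\<^sub>+\<^sub>2 X\<^sup>k\<close>: the Lie
  bracket of the vector fields \<open>f \<partial>\<close> and \<open>g \<partial>\<close>, multiplied by \<open>V\<close>.

  Every transposed Poisson bracket on \<open>\<mu>\<^sub>0\<^sup>n\<close> has this form: the transposed Leibniz rule
  for multiplication by \<open>e\<^sub>1\<close> and \<open>e\<^sub>2\<close> determines all \<open>[e\<^sub>i, e\<^sub>j]\<close> from \<open>[e\<^sub>1, e\<^sub>2]\<close>.
  The automorphisms of \<open>\<mu>\<^sub>0\<^sup>n\<close> are the substitutions \<open>f \<mapsto> f \<circ> u\<close> with \<open>u(0) = 0 \<noteq> u'(0)\<close>,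
  and such a substitution carries \<open>TP(\<alpha>)\<close> to \<open>TP(\<beta>)\<close> iff \<open>V\<^sub>\<alpha> \<circ> u = V\<^sub>\<beta> u'\<close> modulo
  \<open>X\<^sup>n\<^sup>-\<^sup>1\<close>, i.e. iff \<open>u\<close> transforms the vector field \<open>V\<^sub>\<alpha> \<partial>\<close> into \<open>V\<^sub>\<beta> \<partial>\<close>. So the theorem is
  the classification of truncated formal vector fields: a field not vanishing at \<open>0\<close> is
  straightened to \<open>\<partial>\<close>, one with a simple zero is linear, and one with a zero of order
  \<open>m \<ge> 2\<close> becomes \<open>(X\<^sup>m + a X\<^sup>2\<^sup>m\<^sup>-\<^sup>1) \<partial>\<close>. The order of the zero, the linear
  coefficient and the residue of \<open>dX / V\<close> are invariants, which separates the normal forms.\<close>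

unbundle fps_syntax

definition agree_below :: "nat \<Rightarrow> 'a::zero fps \<Rightarrow> 'a fps \<Rightarrow> bool" where
  "agree_below N f g \<longleftrightarrow> (\<forall>i<N. f $ i = g $ i)"

lemma agree_below_refl [simp]: "agree_below N f f"
  by (simp add: agree_below_def)

lemma agree_below_sym: "agree_below N f g \<Longrightarrow> agree_below N g f"
  by (simp add: agree_below_def)

lemma agree_below_trans: "agree_below N f g \<Longrightarrow> agree_below N g h \<Longrightarrow> agree_below N f h"
  by (simp add: agree_below_def)

lemma agree_below_mono: "agree_below N f g \<Longrightarrow> M \<le> N \<Longrightarrow> agree_below M f g"
  by (simp add: agree_below_def)

lemma agree_below_diff:
  "agree_below N f g \<Longrightarrow> agree_below N f' g'
      \<Longrightarrow> agree_below N (f - f') (g - (g'::'a::ab_group_add fps))"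
  by (simp add: agree_below_def)

lemma agree_below_mult_right:
  "agree_below N f (g::'a::comm_ring_1 fps) \<Longrightarrow> agree_below N (f * h) (g * h)"
  unfolding agree_below_def fps_mult_nth by (auto intro!: sum.cong)

lemma agree_below_mult_left:
  "agree_below N f (g::'a::comm_ring_1 fps) \<Longrightarrow> agree_below N (h * f) (h * g)"
  using agree_below_mult_right[of N f g h] by (simp add: mult.commute)

lemma agree_below_mult:
  "agree_below N f (g::'a::comm_ring_1 fps) \<Longrightarrow> agree_below N f' g' \<Longrightarrow> agree_below N (f * f') (g * g')"
  by (meson agree_below_mult_left agree_below_mult_right agree_below_trans)

lemma agree_below_compose_left:
  "agree_below N f (g::'a::comm_ring_1 fps) \<Longrightarrow> agree_below N (f oo v) (g oo v)"
  unfolding agree_below_def fps_compose_nth by (auto intro!: sum.cong)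

lemma agree_below_deriv:
  "agree_below (Suc N) f (g::'a::comm_ring_1 fps) \<Longrightarrow> agree_below N (fps_deriv f) (fps_deriv g)"
  unfolding agree_below_def by auto

lemma agree_below_mult_high_order:
  fixes h f g :: "'a::comm_ring_1 fps"
  assumes h: "\<And>k. k < d \<Longrightarrow> h $ k = 0" and fg: "agree_below N f g"
  shows "agree_below (N + d) (h * f) (h * g)"
  unfolding agree_below_def fps_mult_nth
proof (intro allI impI sum.cong refl)
  fix i k assume i: "i < N + d" and k: "k \<in> {0..i}"
  show "h $ k * f $ (i - k) = h $ k * g $ (i - k)"
  proof (cases "k < d")
    case False
    then have "i - k < N" using i k by auto
    then show ?thesis using fg by (simp add: agree_below_def)
  qed (simp add: h)
qed

lemma agree_below_cancel_X_power:
  fixes f g :: "'a::comm_ring_1 fps"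
  assumes "agree_below (N + d) (fps_X ^ d * f) (fps_X ^ d * g)"
  shows "agree_below N f g"
  unfolding agree_below_def
proof (intro allI impI)
  fix i assume "i < N"
  then have "(fps_X ^ d * f) $ (i + d) = (fps_X ^ d * g) $ (i + d)"
    using assms by (simp add: agree_below_def)
  then show "f $ i = g $ i" by (simp add: fps_X_power_mult_nth)
qed

lemma agree_below_cancel_unit:
  fixes f g w :: "'a::field fps"
  assumes "agree_below N (w * f) (w * g)" "w $ 0 \<noteq> 0"
  shows "agree_below N f g"
proof -
  have "agree_below N (inverse w * (w * f)) (inverse w * (w * g))"
    using agree_below_mult_left[OF assms(1)] .
  then show ?thesis using assms(2)
    by (simp add: mult.assoc[symmetric] inverse_mult_eq_1)
qed

lemma fps_eq_X_mult_shift: "u $ 0 = 0 \<Longrightarrow> u = fps_X * fps_shift 1 (u::'a::comm_ring_1 fps)"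
  by (rule fps_ext) (auto simp: fps_X_mult_nth)

lemma agree_below_cancel_square:
  fixes f g u :: "'a::field fps"
  assumes fg: "agree_below (N + 2) (u\<^sup>2 * f) (u\<^sup>2 * g)" and u0: "u $ 0 = 0" and u1: "u $ 1 \<noteq> 0"
  shows "agree_below N f g"
proof -
  define w where "w = fps_shift 1 u"
  have "u = fps_X * w" unfolding w_def using u0 by (rule fps_eq_X_mult_shift)
  then have "u\<^sup>2 = fps_X ^ 2 * w\<^sup>2"
    by (simp only: power_mult_distrib)
  then have "agree_below (N + 2) (fps_X ^ 2 * (w\<^sup>2 * f)) (fps_X ^ 2 * (w\<^sup>2 * g))"
    using fg by (simp only: mult.assoc)
  then have "agree_below N (w\<^sup>2 * f) (w\<^sup>2 * g)"
    by (rule agree_below_cancel_X_power)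
  moreover have "w\<^sup>2 $ 0 \<noteq> 0" using u1 by (simp add: w_def)
  ultimately show ?thesis by (rule agree_below_cancel_unit)
qed

section \<open>\<open>\<mu>\<^sub>0\<^sup>n\<close> as truncated power series\<close>

definition fps_of_vec :: "(nat \<Rightarrow> complex) \<Rightarrow> complex fps" where
  "fps_of_vec x = Abs_fps x"

definition vec_of_fps :: "nat \<Rightarrow> complex fps \<Rightarrow> nat \<Rightarrow> complex" where
  "vec_of_fps n f = (\<lambda>k. if 1 \<le> k \<and> k \<le> n then f $ k else 0)"

definition basis_vec :: "nat \<Rightarrow> nat \<Rightarrow> nat \<Rightarrow> complex" where
  "basis_vec n i = (\<lambda>t. if t = i \<and> 1 \<le> i \<and> i \<le> n then 1 else 0)"

definition tp_field :: "(nat \<Rightarrow> complex) \<Rightarrow> complex fps" where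
  "tp_field \<alpha> = Abs_fps (\<lambda>i. \<alpha> (i + 2))"

definition witt_bracket :: "complex fps \<Rightarrow> complex fps \<Rightarrow> complex fps" where
  "witt_bracket f g = f * fps_deriv g - fps_deriv f * g"

lemma fps_of_vec_nth [simp]: "fps_of_vec x $ k = x k"
  by (simp add: fps_of_vec_def)

lemma tp_field_nth [simp]: "tp_field \<alpha> $ k = \<alpha> (k + 2)"
  by (simp add: tp_field_def)

lemma vec_carrier_iff: "x \<in> vec_carrier n \<longleftrightarrow> x 0 = 0 \<and> (\<forall>k>n. x k = 0)"
  unfolding vec_carrier_def by (auto simp: Suc_le_eq)

lemma vec_carrier_0: "x \<in> vec_carrier n \<Longrightarrow> x 0 = 0"
  by (simp add: vec_carrier_iff)

lemma vec_carrier_gt: "x \<in> vec_carrier n \<Longrightarrow> n < k \<Longrightarrow> x k = 0"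
  by (simp add: vec_carrier_iff)

lemma vec_of_fps_carrier [simp]: "vec_of_fps n f \<in> vec_carrier n"
  by (simp add: vec_carrier_def vec_of_fps_def)

lemma basis_vec_carrier [simp]: "basis_vec n i \<in> vec_carrier n"
  by (simp add: vec_carrier_def basis_vec_def)

lemma vec_of_fps_of_vec: "x \<in> vec_carrier n \<Longrightarrow> vec_of_fps n (fps_of_vec x) = x"
  by (auto simp: vec_of_fps_def fun_eq_iff vec_carrier_iff Suc_le_eq)

lemma fps_of_vec_of_fps: "f $ 0 = 0 \<Longrightarrow> agree_below (Suc n) (fps_of_vec (vec_of_fps n f)) f"
  by (auto simp: agree_below_def vec_of_fps_def Suc_le_eq)

lemma vec_of_fps_cong: "agree_below (Suc n) f g \<Longrightarrow> vec_of_fps n f = vec_of_fps n g"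
  by (auto simp: agree_below_def vec_of_fps_def fun_eq_iff)

lemma vec_of_fps_linear:
  "vec_of_fps n (fps_const c * f + g) = scal c (vec_of_fps n f) + vec_of_fps n g"
  by (auto simp: vec_of_fps_def scal_def fun_eq_iff)

lemma fps_of_vec_linear: "fps_of_vec (scal c x + y) = fps_const c * fps_of_vec x + fps_of_vec y"
  by (rule fps_ext) (simp add: scal_def)

lemma fps_of_basis_vec: "1 \<le> k \<Longrightarrow> k \<le> n \<Longrightarrow> fps_of_vec (basis_vec n k) = fps_X ^ k"
  by (rule fps_ext) (auto simp: basis_vec_def fps_X_power_nth)

lemma fps_of_vec_eq_sum:
  assumes x: "x \<in> vec_carrier n"
  shows "fps_of_vec x = (\<Sum>i=1..n. fps_const (x i) * fps_X ^ i)"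
proof (rule fps_ext)
  fix k
  have "(\<Sum>i=1..n. fps_const (x i) * fps_X ^ i) $ k = (\<Sum>i=1..n. if i = k then x i else 0)"
    unfolding fps_sum_nth by (rule sum.cong) (auto simp: fps_X_power_nth)
  also have "\<dots> = x k"
    using vec_carrier_0[OF x] vec_carrier_gt[OF x] by (auto simp: sum.delta' not_le Suc_le_eq)
  finally show "fps_of_vec x $ k = (\<Sum>i=1..n. fps_const (x i) * fps_X ^ i) $ k" by simp
qed

lemma mu0_eq_fps_mult:
  assumes x: "x \<in> vec_carrier n" and y: "y \<in> vec_carrier n"
  shows "mu0 n x y = vec_of_fps n (fps_of_vec x * fps_of_vec y)"
proof (rule ext)
  fix k
  show "mu0 n x y k = vec_of_fps n (fps_of_vec x * fps_of_vec y) k"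
  proof (cases "2 \<le> k \<and> k \<le> n")
    case True
    have "{0..k} = insert 0 (insert k {1..k-1})" "k \<notin> {1..k-1}" "0 \<notin> insert k {1..k-1}"
      using True by auto
    then have "(fps_of_vec x * fps_of_vec y) $ k = (\<Sum>i=1..k-1. x i * y (k - i))"
      using vec_carrier_0[OF x] vec_carrier_0[OF y] by (simp add: fps_mult_nth)
    then show ?thesis using True by (simp add: mu0_def vec_of_fps_def)
  next
    case False
    then consider "k = 0" | "k = 1" | "n < k" by linarith
    then show ?thesis using vec_carrier_0[OF x] vec_carrier_0[OF y]
      by cases (auto simp: mu0_def vec_of_fps_def fps_mult_nth_1)
  qed
qed

lemma witt_bracket_sum:
  "witt_bracket (\<Sum>i\<in>I. fps_const (c i) * fps_X ^ i) (\<Sum>j\<in>J. fps_const (d j) * fps_X ^ j)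
   = (\<Sum>i\<in>I. \<Sum>j\<in>J. fps_const (c i * d j) * witt_bracket (fps_X ^ i) (fps_X ^ j))"
proof -
  have "witt_bracket (\<Sum>i\<in>I. fps_const (c i) * fps_X ^ i) (\<Sum>j\<in>J. fps_const (d j) * fps_X ^ j)
    = (\<Sum>i\<in>I. \<Sum>j\<in>J. (fps_const (c i) * fps_X ^ i) * (fps_const (d j) * fps_deriv (fps_X ^ j)))
    - (\<Sum>i\<in>I. \<Sum>j\<in>J. (fps_const (c i) * fps_deriv (fps_X ^ i)) * (fps_const (d j) * fps_X ^ j))"
    unfolding witt_bracket_def by (simp add: fps_deriv_sum sum_product)
  then show ?thesis
    unfolding sum_subtractf[symmetric] witt_bracket_def
    by (simp add: algebra_simps flip: fps_const_mult)
qed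

lemma witt_bracket_X_power:
  assumes "1 \<le> i" "1 \<le> j"
  shows "witt_bracket (fps_X ^ i) (fps_X ^ j)
      = fps_const (of_int (int j - int i)) * fps_X ^ (i + j - 1)"
proof -
  have "fps_X ^ i * fps_X ^ (j - 1) = (fps_X::complex fps) ^ (i + j - 1)"
    "fps_X ^ (i - 1) * fps_X ^ j = (fps_X::complex fps) ^ (i + j - 1)"
    using assms by (simp_all flip: power_add)
  then show ?thesis
    unfolding witt_bracket_def fps_deriv_power
    by (simp add: algebra_simps of_nat_diff flip: fps_const_sub)
qed

lemma tp_basis_eq:
  assumes "1 \<le> i" "1 \<le> j" "1 \<le> t" "t \<le> n"
  shows "tp_basis n \<alpha> i j t
       = of_int (int j - int i) * (if t < i + j - 1 then 0 else \<alpha> (t - (i + j - 1) + 2))"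
proof (cases "i + j = 2")
  case False
  then have "t + 3 - (i + j) = t - (i + j - 1) + 2" if "\<not> t < i + j - 1" using that assms by auto
  then show ?thesis using False assms by (auto simp: tp_basis_def)
qed (use assms in \<open>simp add: tp_basis_def\<close>)

lemma tp_basis_outside: "t = 0 \<or> n < t \<Longrightarrow> tp_basis n \<alpha> i j t = 0"
  by (auto simp: tp_basis_def)

lemma tp_bracket_eq_fps:
  assumes x: "x \<in> vec_carrier n" and y: "y \<in> vec_carrier n"
  shows "tp_bracket n \<alpha> x y
      = vec_of_fps n (tp_field \<alpha> * witt_bracket (fps_of_vec x) (fps_of_vec y))"
proof (rule ext)
  fix t
  have monomial: "(tp_field \<alpha> * (fps_const (x i * y j) * witt_bracket (fps_X ^ i) (fps_X ^ j))) $ t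
      = x i * y j * (of_int (int j - int i)
        * (if t < i + j - 1 then 0 else \<alpha> (t - (i + j - 1) + 2)))"
    if "1 \<le> i" "1 \<le> j" for i j
  proof -
    have e: "tp_field \<alpha> * (fps_const (x i * y j) * witt_bracket (fps_X ^ i) (fps_X ^ j))
       = fps_const (x i * y j * of_int (int j - int i)) * (fps_X ^ (i + j - 1) * tp_field \<alpha>)"
      using that by (simp add: witt_bracket_X_power algebra_simps)
    show ?thesis
      unfolding e fps_mult_left_const_nth fps_X_power_mult_nth tp_field_nth by simp
  qed
  then have "(tp_field \<alpha> * witt_bracket (fps_of_vec x) (fps_of_vec y)) $ t
      = (\<Sum>i=1..n. \<Sum>j=1..n. x i * y j *
          (of_int (int j - int i) * (if t < i + j - 1 then 0 else \<alpha> (t - (i + j - 1) + 2))))"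
    unfolding fps_of_vec_eq_sum[OF x] fps_of_vec_eq_sum[OF y] witt_bracket_sum
      sum_distrib_left fps_sum_nth
    by (intro sum.cong refl) (simp add: monomial)
  then show "tp_bracket n \<alpha> x y t
      = vec_of_fps n (tp_field \<alpha> * witt_bracket (fps_of_vec x) (fps_of_vec y)) t"
    by (auto simp: vec_of_fps_def tp_bracket_def tp_basis_eq tp_basis_outside intro!: sum.cong)
qed

lemma scal_apply: "scal a v t = a * v t"
  by (simp add: scal_def)

lemma sum_apply: "(\<Sum>i\<in>S. g i) t = (\<Sum>i\<in>S. (g i :: nat \<Rightarrow> complex) t)"
  by (induction S rule: infinite_finite_induct) auto

lemma vec_carrier_zero [simp]: "0 \<in> vec_carrier n"
  by (simp add: vec_carrier_def)

lemma vec_carrier_add [simp]: "x \<in> vec_carrier n \<Longrightarrow> y \<in> vec_carrier n \<Longrightarrow> x + y \<in> vec_carrier n"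
  by (simp add: vec_carrier_def)

lemma vec_carrier_scal [simp]: "x \<in> vec_carrier n \<Longrightarrow> scal a x \<in> vec_carrier n"
  by (simp add: vec_carrier_def scal_def)

lemma vec_carrier_sum: "(\<And>i. i \<in> S \<Longrightarrow> g i \<in> vec_carrier n) \<Longrightarrow> (\<Sum>i\<in>S. g i) \<in> vec_carrier n"
  by (induction S rule: infinite_finite_induct) auto

lemma scal_1 [simp]: "scal 1 x = x"
  by (simp add: scal_def fun_eq_iff)

lemma linear_on_zero: "linear_on n f \<Longrightarrow> f 0 = 0"
  unfolding linear_on_def by (metis scal_1 vec_carrier_zero add_cancel_right_right add_0)

lemma linear_on_add:
  "linear_on n f \<Longrightarrow> x \<in> vec_carrier n \<Longrightarrow> y \<in> vec_carrier n \<Longrightarrow> f (x + y) = f x + f y"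
  unfolding linear_on_def by (metis scal_1)

lemma linear_on_carrier: "linear_on n f \<Longrightarrow> x \<in> vec_carrier n \<Longrightarrow> f x \<in> vec_carrier n"
  unfolding linear_on_def by blast

lemma linear_on_sum:
  assumes f: "linear_on n f" and v: "\<And>i. i \<in> S \<Longrightarrow> v i \<in> vec_carrier n"
  shows "f (\<Sum>i\<in>S. scal (c i) (v i)) = (\<Sum>i\<in>S. scal (c i) (f (v i)))"
  using v
proof (induction S rule: infinite_finite_induct)
  case (insert i F)
  have "f (\<Sum>i\<in>insert i F. scal (c i) (v i)) = f (scal (c i) (v i) + (\<Sum>i\<in>F. scal (c i) (v i)))"
    using insert.hyps by (subst sum.insert) auto
  also have "\<dots> = scal (c i) (f (v i)) + (\<Sum>i\<in>F. scal (c i) (f (v i)))"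
    using insert f vec_carrier_sum[of F "\<lambda>i. scal (c i) (v i)" n] unfolding linear_on_def by simp
  finally show ?case using insert.hyps by (subst sum.insert) auto
qed (simp_all add: linear_on_zero[OF f])

lemma vec_eq_sum_basis:
  assumes x: "x \<in> vec_carrier n"
  shows "x = (\<Sum>i=1..n. scal (x i) (basis_vec n i))"
proof (rule ext)
  fix t
  have "(\<Sum>i=1..n. scal (x i) (basis_vec n i)) t = (\<Sum>i=1..n. if i = t then x i else 0)"
    unfolding sum_apply by (rule sum.cong) (auto simp: basis_vec_def scal_apply)
  also have "\<dots> = x t"
    using vec_carrier_0[OF x] vec_carrier_gt[OF x] by (auto simp: sum.delta' not_le Suc_le_eq)
  finally show "x t = (\<Sum>i=1..n. scal (x i) (basis_vec n i)) t" by simp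
qed

lemma linear_on_eq_sum_basis:
  "linear_on n f \<Longrightarrow> x \<in> vec_carrier n \<Longrightarrow> f x = (\<Sum>i=1..n. scal (x i) (f (basis_vec n i)))"
  using linear_on_sum[of n f "{1..n}" "basis_vec n" x] vec_eq_sum_basis[of x n] by simp

lemma bilinear_on_linear_left: "bilinear_on n b \<Longrightarrow> z \<in> vec_carrier n \<Longrightarrow> linear_on n (\<lambda>x. b x z)"
  unfolding bilinear_on_def linear_on_def by blast

lemma bilinear_on_linear_right: "bilinear_on n b \<Longrightarrow> z \<in> vec_carrier n \<Longrightarrow> linear_on n (b z)"
  unfolding bilinear_on_def linear_on_def by blast

lemma bilinear_on_eq_sum_basis:
  assumes b: "bilinear_on n b" and x: "x \<in> vec_carrier n" and y: "y \<in> vec_carrier n"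
  shows "b x y t = (\<Sum>i=1..n. \<Sum>j=1..n. x i * y j * b (basis_vec n i) (basis_vec n j) t)"
proof -
  have "b x y = (\<Sum>i=1..n. scal (x i) (b (basis_vec n i) y))"
    using linear_on_eq_sum_basis[OF bilinear_on_linear_left[OF b y] x] .
  also have "\<dots> = (\<Sum>i=1..n. scal (x i) (\<Sum>j=1..n. scal (y j) (b (basis_vec n i) (basis_vec n j))))"
    using linear_on_eq_sum_basis[OF bilinear_on_linear_right[OF b basis_vec_carrier] y] by simp
  finally show ?thesis
    by (simp add: sum_apply sum_distrib_left mult.assoc scal_apply)
qed

lemma bilinear_on_zero_left: "bilinear_on n b \<Longrightarrow> y \<in> vec_carrier n \<Longrightarrow> b 0 y = 0"
  using linear_on_zero[OF bilinear_on_linear_left] by blast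

lemma bilinear_on_zero_right: "bilinear_on n b \<Longrightarrow> y \<in> vec_carrier n \<Longrightarrow> b y 0 = 0"
  using linear_on_zero[OF bilinear_on_linear_right] by blast

lemma bilinear_on_antisym:
  assumes b: "bilinear_on n b" and alt: "\<forall>x\<in>vec_carrier n. b x x = 0"
    and x: "x \<in> vec_carrier n" and y: "y \<in> vec_carrier n"
  shows "b x y = - b y x"
proof -
  have "b (x + y) (x + y) = b x x + b x y + (b y x + b y y)"
    using linear_on_add[OF bilinear_on_linear_left[OF b] x y]
      linear_on_add[OF bilinear_on_linear_right[OF b x] x y]
      linear_on_add[OF bilinear_on_linear_right[OF b y] x y] x y by simp
  then have "0 = b x y + b y x" using alt x y by simp
  then show ?thesis by (simp add: eq_neg_iff_add_eq_0)
qed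

section \<open>Transposed Poisson brackets on \<open>\<mu>\<^sub>0\<^sup>n\<close>\<close>

lemma basis_vec_outside: "n < i \<Longrightarrow> basis_vec n i = 0"
  by (simp add: basis_vec_def fun_eq_iff)

lemma mu0_basis_vec_left:
  assumes "1 \<le> k"
  shows "mu0 n (basis_vec n k) v t = (if k < t \<and> t \<le> n then v (t - k) else 0)"
proof (cases "2 \<le> t \<and> t \<le> n")
  case True
  have "(\<Sum>l=1..t-1. basis_vec n k l * v (t - l))
      = (\<Sum>l=1..t-1. if l = k then (if k \<le> n then v (t - k) else 0) else 0)"
    by (rule sum.cong) (auto simp: basis_vec_def assms)
  then show ?thesis using True assms by (auto simp: mu0_def sum.delta')
qed (use assms in \<open>auto simp: mu0_def\<close>)

lemma mu0_basis_vec: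
  assumes "1 \<le> k" "1 \<le> i"
  shows "mu0 n (basis_vec n k) (basis_vec n i) = basis_vec n (k + i)"
  unfolding fun_eq_iff mu0_basis_vec_left[OF assms(1)] using assms by (auto simp: basis_vec_def)

text \<open>The structure constants of TP(a) without the cut-off \<open>i + j \<le> n + 1\<close> of
  \<^const>\<open>tp_basis\<close>, so that the transposed Leibniz rule holds for all indices.\<close>

definition tp_coeff :: "nat \<Rightarrow> (nat \<Rightarrow> complex) \<Rightarrow> nat \<Rightarrow> nat \<Rightarrow> nat \<Rightarrow> complex" where
  "tp_coeff n a i j t =
     of_int (int j - int i) * (if i + j \<le> t + 2 \<and> t \<le> n then a (t + 3 - (i + j)) else 0)"

lemma tp_coeff_antisym: "tp_coeff n a i j t = - tp_coeff n a j i t"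
  by (simp add: tp_coeff_def add.commute algebra_simps)

lemma tp_coeff_Leibniz:
  assumes "1 \<le> i" "1 \<le> j" "1 \<le> k"
  shows "(if k < t \<and> t \<le> n then 2 * tp_coeff n a i j (t - k) else 0)
       = tp_coeff n a (i + k) j t + tp_coeff n a i (j + k) t"
proof -
  have c: "(of_int (int j - int (i + k)) + of_int (int (j + k) - int i) :: complex)
      = 2 * of_int (int j - int i)"
    by simp
  have sum: "tp_coeff n a (i + k) j t + tp_coeff n a i (j + k) t = 2 * of_int (int j - int i) *
      (if i + j + k \<le> t + 2 \<and> t \<le> n then a (t + 3 - (i + j + k)) else 0)"
    unfolding tp_coeff_def c[symmetric] by (simp add: algebra_simps add.assoc add.left_commute)
  show ?thesis
  proof (cases "k < t \<and> t \<le> n")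
    case True
    then have "i + j \<le> t - k + 2 \<longleftrightarrow> i + j + k \<le> t + 2"
      "t - k + 3 - (i + j) = t + 3 - (i + j + k)" "t - k \<le> n"
    by auto
    then show ?thesis using True sum by (simp add: tp_coeff_def)
  next
    case False
    then have "i + j + k \<le> t + 2 \<and> t \<le> n \<Longrightarrow> i = j" using assms by auto
    then show ?thesis using False sum by auto
  qed
qed

text \<open>On an antidiagonal \<open>i + j = s\<close> the case \<open>k = 1\<close> of the recurrence makes
  consecutive entries opposite, whereas \<open>k = 2\<close> makes entries two apart opposite as well;
  together they force the whole antidiagonal to vanish.\<close>

lemma antisym_recurrence_vanishes:
  fixes D :: "nat \<Rightarrow> nat \<Rightarrow> 'a \<Rightarrow> complex"
  assumes antisym: "\<And>i j t. D i j t = - D j i t"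
    and base: "\<And>t. D 1 2 t = 0"
    and rec: "\<And>i j k t. 1 \<le> i \<Longrightarrow> 1 \<le> j \<Longrightarrow> 1 \<le> k \<Longrightarrow> k \<le> 2 \<Longrightarrow> i + j + k \<le> M \<Longrightarrow>
        (\<forall>t. D i j t = 0) \<Longrightarrow> D (i + k) j t + D i (j + k) t = 0"
  shows "1 \<le> i \<Longrightarrow> 1 \<le> j \<Longrightarrow> i + j \<le> M \<Longrightarrow> D i j t = 0"
proof (induction "i + j" arbitrary: i j t rule: less_induct)
  case less
  define s where "s = i + j"
  show ?case
  proof (cases "s \<le> 3")
    case True
    then have "(i = 1 \<and> j = 1) \<or> (i = 1 \<and> j = 2) \<or> (i = 2 \<and> j = 1)"
      using less.prems s_def by auto
    then show ?thesis using antisym[of 1 1 t] antisym[of 2 1 t] base[of t] by auto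
  next
    case False
    define c where "c p t = D p (s - p) t" for p t
    have IH: "\<And>p q t. 1 \<le> p \<Longrightarrow> 1 \<le> q \<Longrightarrow> p + q < s \<Longrightarrow> D p q t = 0"
      using less.hyps less.prems s_def by auto
    have step1: "c (p + 1) t = - c p t" if "1 \<le> p" "p \<le> s - 2" for p t
    proof -
      have "D (p + 1) (s - 1 - p) t + D p (s - 1 - p + 1) t = 0"
        using rec[of p "s - 1 - p" 1 t] IH[of p "s - 1 - p"] that False less.prems s_def by auto
      moreover have "s - 1 - p + 1 = s - p" "s - 1 - p = s - (p + 1)" using that False by auto
      ultimately show ?thesis unfolding c_def by (simp add: eq_neg_iff_add_eq_0)
    qed
    have step2: "c 3 t = - c 1 t" for t
    proof -
      have "D (1 + 2) (s - 3) t + D 1 (s - 3 + 2) t = 0"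
        using rec[of 1 "s - 3" 2 t] IH[of 1 "s - 3"] False less.prems s_def by auto
      moreover have "s - 3 + 2 = s - 1" using False by auto
      ultimately show ?thesis unfolding c_def by (simp add: numeral_3_eq_3 eq_neg_iff_add_eq_0)
    qed
    have c1: "c 1 t = 0" for t
    proof -
      have "c 3 t = c 1 t"
        using step1[of 1 t] step1[of 2 t] False by (simp add: numeral_3_eq_3 numeral_2_eq_2)
      then show ?thesis using step2[of t] by simp
    qed
    have cp: "c p t = 0" if "1 \<le> p" "p \<le> s - 1" for p
      using that
    proof (induction p rule: dec_induct)
      case (step p)
      then show ?case using step1[of p t] by simp
    qed (rule c1)
    have "D i j t = c i t" unfolding c_def s_def by simp
    then show ?thesis using cp[of i] less.prems s_def by auto
  qed
qed

lemma is_TP_bilinear: "is_TP n m br \<Longrightarrow> bilinear_on n br"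
  unfolding is_TP_def by (elim conjE)

lemma is_TP_alternating: "is_TP n m br \<Longrightarrow> x \<in> vec_carrier n \<Longrightarrow> br x x = 0"
  unfolding is_TP_def by (elim conjE) blast

lemma is_TP_transposed_Leibniz:
  "is_TP n m br \<Longrightarrow> x \<in> vec_carrier n \<Longrightarrow> y \<in> vec_carrier n \<Longrightarrow> z \<in> vec_carrier n \<Longrightarrow>
     scal 2 (m z (br x y)) = br (m z x) y + br x (m z y)"
  unfolding is_TP_def by (elim conjE) blast

lemma bilinear_on_basis_vec_outside:
  assumes "bilinear_on n b" "n < i \<or> n < j"
  shows "b (basis_vec n i) (basis_vec n j) = 0"
  using assms(2)
proof
  assume "n < i" then show ?thesis
    using basis_vec_outside bilinear_on_zero_left[OF assms(1) basis_vec_carrier] by metis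
next
  assume "n < j" then show ?thesis
    using basis_vec_outside bilinear_on_zero_right[OF assms(1) basis_vec_carrier] by metis
qed

lemma is_TP_basis_bracket_antisym:
  assumes "is_TP n m br"
  shows "br (basis_vec n i) (basis_vec n j) t = - br (basis_vec n j) (basis_vec n i) t"
proof -
  have "br (basis_vec n i) (basis_vec n j) = - br (basis_vec n j) (basis_vec n i)"
    using is_TP_alternating[OF assms]
    by (intro bilinear_on_antisym[OF is_TP_bilinear[OF assms]]) simp_all
  then show ?thesis by simp
qed

lemma is_TP_mu0_basis_Leibniz:
  assumes TP: "is_TP n (mu0 n) br" and "1 \<le> i" "1 \<le> j" "1 \<le> k"
  shows "(if k < t \<and> t \<le> n then 2 * br (basis_vec n i) (basis_vec n j) (t - k) else 0)
       = br (basis_vec n (i + k)) (basis_vec n j) t + br (basis_vec n i) (basis_vec n (j + k)) t"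
proof -
  have "scal 2 (mu0 n (basis_vec n k) (br (basis_vec n i) (basis_vec n j))) t =
     br (basis_vec n (i + k)) (basis_vec n j) t + br (basis_vec n i) (basis_vec n (j + k)) t"
    using is_TP_transposed_Leibniz[OF TP basis_vec_carrier basis_vec_carrier basis_vec_carrier,
        of k i j]
    unfolding mu0_basis_vec[OF \<open>1 \<le> k\<close> \<open>1 \<le> i\<close>] mu0_basis_vec[OF \<open>1 \<le> k\<close> \<open>1 \<le> j\<close>]
    by (simp add: add.commute)
  then show ?thesis by (auto simp: scal_apply mu0_basis_vec_left[OF \<open>1 \<le> k\<close>] split: if_splits)
qed

definition bracket_defect ::
    "nat \<Rightarrow> ((nat \<Rightarrow> complex) \<Rightarrow> (nat \<Rightarrow> complex) \<Rightarrow> nat \<Rightarrow> complex) \<Rightarrow> nat \<Rightarrow> nat \<Rightarrow> nat \<Rightarrow> complex" where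
  "bracket_defect n br i j t =
     br (basis_vec n i) (basis_vec n j) t - tp_coeff n (br (basis_vec n 1) (basis_vec n 2)) i j t"

lemma bracket_defect_antisym:
  "is_TP n m br \<Longrightarrow> bracket_defect n br i j t = - bracket_defect n br j i t"
  unfolding bracket_defect_def
  using is_TP_basis_bracket_antisym[of n m br i j t] tp_coeff_antisym[of n _ i j t] by simp

lemma bracket_defect_1_2:
  assumes "is_TP n m br"
  shows "bracket_defect n br 1 2 t = 0"
proof -
  have "br (basis_vec n 1) (basis_vec n 2) \<in> vec_carrier n"
    using is_TP_bilinear[OF assms] by (simp add: bilinear_on_def)
  then show ?thesis
    by (cases "t = 0") (auto simp: bracket_defect_def tp_coeff_def vec_carrier_iff not_le)
qed

lemma bracket_defect_Leibniz:
  assumes "is_TP n (mu0 n) br" "1 \<le> i" "1 \<le> j" "1 \<le> k"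
  shows "bracket_defect n br (i + k) j t + bracket_defect n br i (j + k) t
       = (if k < t \<and> t \<le> n then 2 * bracket_defect n br i j (t - k) else 0)"
  using is_TP_mu0_basis_Leibniz[OF assms, of t] tp_coeff_Leibniz[OF assms(2-4), of t n]
  unfolding bracket_defect_def by (auto simp: algebra_simps)

lemma is_TP_bracket_defect_low:
  assumes "is_TP n (mu0 n) br" "1 \<le> i" "1 \<le> j" "i + j \<le> n + 1"
  shows "bracket_defect n br i j t = 0"
proof (rule antisym_recurrence_vanishes[of "bracket_defect n br" "n + 1"])
  fix i j k t
  assume "1 \<le> i" "1 \<le> j" "1 \<le> k" "k \<le> 2" "i + j + k \<le> n + 1" "\<forall>t. bracket_defect n br i j t = 0"
  then show "bracket_defect n br (i + k) j t + bracket_defect n br i (j + k) t = 0"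
    using bracket_defect_Leibniz[OF assms(1), of i j k t] by simp
qed (use assms bracket_defect_antisym bracket_defect_1_2 in \<open>blast+\<close>)

text \<open>Comparing the Leibniz rule for \<open>(e\<^sub>1, e\<^sub>2)\<close> shifted by \<open>e\<^sub>n\<^sub>-\<^sub>1\<close> with the one for
  \<open>(e\<^sub>n, e\<^sub>1)\<close> shifted by \<open>e\<^sub>1\<close> gives \<open>2 a\<^sub>1 = 2 (1 - n) a\<^sub>1\<close>.\<close>

lemma is_TP_basis_bracket_1_2_at_1:
  assumes TP: "is_TP n (mu0 n) br" and n: "2 \<le> n"
  shows "br (basis_vec n 1) (basis_vec n 2) 1 = 0"
proof -
  define b where "b i j = br (basis_vec n i) (basis_vec n j)" for i j
  have bl: "bilinear_on n br" using is_TP_bilinear[OF TP] .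
  have "2 * b 1 2 1 = b n 2 n"
    using is_TP_mu0_basis_Leibniz[OF TP, of 1 2 "n - 1" n] n
      bilinear_on_basis_vec_outside[OF bl, of 1 "n + 1"]
    unfolding b_def by auto
  moreover have "2 * b n 1 (n - 1) = b n 2 n"
    using is_TP_mu0_basis_Leibniz[OF TP, of n 1 1 n] n
      bilinear_on_basis_vec_outside[OF bl, of "n + 1" 1]
    unfolding b_def by (auto simp: numeral_2_eq_2)
  moreover have "b n 1 (n - 1) = tp_coeff n (b 1 2) n 1 (n - 1)"
    using is_TP_bracket_defect_low[OF TP, of n 1 "n - 1"] n unfolding bracket_defect_def b_def
    by auto
  moreover have "tp_coeff n (b 1 2) n 1 (n - 1) = (1 - of_nat n) * b 1 2 1"
    using n by (simp add: tp_coeff_def of_nat_diff)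
  ultimately have "2 * b 1 2 1 = 2 * ((1 - of_nat n) * b 1 2 1)" by simp
  then have "of_nat n * b 1 2 1 = 0" by (simp add: algebra_simps)
  then show ?thesis using n unfolding b_def by simp
qed

lemma tp_coeff_eq_tp_basis:
  assumes "a 1 = 0" "1 \<le> i" "1 \<le> j"
  shows "tp_coeff n a i j t = tp_basis n a i j t"
proof (cases "i + j \<le> t + 2 \<and> t \<le> n")
  case True
  then consider "i + j = 2" | "t + 2 = i + j" | "i + j \<noteq> 2" "t + 2 \<noteq> i + j" by linarith
  then show ?thesis
  proof cases
    case 2
    then have "t + 3 - (i + j) = 1" by simp
    then show ?thesis using True assms by (auto simp: tp_coeff_def tp_basis_def)
  qed (use True assms in \<open>auto simp: tp_coeff_def tp_basis_def\<close>)
qed (auto simp: tp_coeff_def tp_basis_def)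

lemma is_TP_basis_bracket:
  assumes TP: "is_TP n (mu0 n) br" and n: "2 \<le> n"
    and "1 \<le> i" "i \<le> n" "1 \<le> j" "j \<le> n"
  shows "br (basis_vec n i) (basis_vec n j) t
       = tp_basis n (br (basis_vec n 1) (basis_vec n 2)) i j t"
proof -
  define a where "a = br (basis_vec n 1) (basis_vec n 2)"
  have a1: "a 1 = 0" unfolding a_def using is_TP_basis_bracket_1_2_at_1[OF TP n] .
  have "bracket_defect n br i j t = 0"
  proof (rule antisym_recurrence_vanishes[of "bracket_defect n br" "2 * n + 2"])
    fix i j k t :: nat
    assume ij: "1 \<le> i" "1 \<le> j" "1 \<le> k" "k \<le> 2" "\<forall>t. bracket_defect n br i j t = 0"
    show "bracket_defect n br (i + k) j t + bracket_defect n br i (j + k) t = 0"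
    proof (cases "i \<le> n \<and> j \<le> n")
      case True
      then show ?thesis using bracket_defect_Leibniz[OF TP, of i j k t] ij by simp
    next
      case False
      then show ?thesis
        using bilinear_on_basis_vec_outside[OF is_TP_bilinear[OF TP]] ij
          tp_coeff_eq_tp_basis[where a = a, OF a1, of _ _ n t]
        unfolding bracket_defect_def a_def[symmetric] by (auto simp: tp_basis_def)
    qed
  qed (use assms bracket_defect_antisym bracket_defect_1_2 in \<open>(blast | linarith)+\<close>)
  then show ?thesis
    using tp_coeff_eq_tp_basis[where a = a, OF a1, of i j n t] assms
    by (simp add: bracket_defect_def a_def)
qed

theorem is_TP_mu0_eq_tp_bracket:
  assumes "is_TP n (mu0 n) br" "2 \<le> n" "x \<in> vec_carrier n" "y \<in> vec_carrier n"
  shows "br x y = tp_bracket n (br (basis_vec n 1) (basis_vec n 2)) x y"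
  unfolding fun_eq_iff tp_bracket_def
    bilinear_on_eq_sum_basis[OF is_TP_bilinear[OF assms(1)] assms(3,4)]
  using is_TP_basis_bracket[OF assms(1,2)] by (auto intro!: sum.cong)

section \<open>Automorphisms of \<open>\<mu>\<^sub>0\<^sup>n\<close> are substitutions\<close>

definition subst_vec :: "nat \<Rightarrow> complex fps \<Rightarrow> (nat \<Rightarrow> complex) \<Rightarrow> nat \<Rightarrow> complex" where
  "subst_vec n u x = vec_of_fps n (fps_of_vec x oo u)"

lemma linear_on_subst_vec: "linear_on n (subst_vec n u)"
  unfolding linear_on_def subst_vec_def
  by (simp add: fps_of_vec_linear fps_compose_add_distrib vec_of_fps_linear
      flip: fps_const_mult_apply_left)

lemma subst_vec_of_fps:
  "f $ 0 = 0 \<Longrightarrow> subst_vec n u (vec_of_fps n f) = vec_of_fps n (f oo u)"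
  unfolding subst_vec_def
  by (intro vec_of_fps_cong agree_below_compose_left fps_of_vec_of_fps)

lemma fps_of_subst_vec:
  "x \<in> vec_carrier n \<Longrightarrow> agree_below (Suc n) (fps_of_vec (subst_vec n u x)) (fps_of_vec x oo u)"
  unfolding subst_vec_def by (rule fps_of_vec_of_fps) (simp add: vec_carrier_0)

lemma subst_vec_subst_vec:
  assumes "x \<in> vec_carrier n" "u $ 0 = 0" "v $ 0 = 0"
  shows "subst_vec n v (subst_vec n u x) = subst_vec n (u oo v) x"
  using subst_vec_of_fps[of "fps_of_vec x oo u" n v] assms
  by (simp add: subst_vec_def fps_compose_assoc vec_carrier_0)

lemma bij_betw_subst_vec:
  assumes u0: "u $ 0 = 0" and u1: "u $ 1 \<noteq> 0"
  shows "bij_betw (subst_vec n u) (vec_carrier n) (vec_carrier n)"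
proof (rule bij_betwI[where g = "subst_vec n (fps_inv u)"])
  have v0: "fps_inv u $ 0 = 0" by (simp add: fps_inv_def)
  show "subst_vec n (fps_inv u) (subst_vec n u x) = x" if "x \<in> vec_carrier n" for x
    using subst_vec_subst_vec[OF that u0 v0] fps_inv_right[OF u0 u1] vec_of_fps_of_vec[OF that]
    by (simp add: subst_vec_def)
  show "subst_vec n u (subst_vec n (fps_inv u) y) = y" if "y \<in> vec_carrier n" for y
    using subst_vec_subst_vec[OF that v0 u0] fps_inv[OF u0 u1] vec_of_fps_of_vec[OF that]
    by (simp add: subst_vec_def)
qed (simp_all add: subst_vec_def)

lemma subst_vec_mu0:
  assumes x: "x \<in> vec_carrier n" and y: "y \<in> vec_carrier n" and u0: "u $ 0 = 0"
  shows "subst_vec n u (mu0 n x y) = mu0 n (subst_vec n u x) (subst_vec n u y)"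
proof -
  have "subst_vec n u (mu0 n x y) = vec_of_fps n ((fps_of_vec x * fps_of_vec y) oo u)"
    unfolding mu0_eq_fps_mult[OF x y] using vec_carrier_0[OF x]
    by (intro subst_vec_of_fps) simp
  also have "\<dots> = vec_of_fps n ((fps_of_vec x oo u) * (fps_of_vec y oo u))"
    by (simp only: fps_compose_mult_distrib[OF u0])
  also have "\<dots> = vec_of_fps n (fps_of_vec (subst_vec n u x) * fps_of_vec (subst_vec n u y))"
    by (rule vec_of_fps_cong, rule agree_below_sym, intro agree_below_mult fps_of_subst_vec x y)
  also have "\<dots> = mu0 n (subst_vec n u x) (subst_vec n u y)"
    by (simp only: mu0_eq_fps_mult subst_vec_def vec_of_fps_carrier)
  finally show ?thesis .
qed

lemma witt_bracket_compose:
  "u $ 0 = 0 \<Longrightarrow> witt_bracket (f oo u) (g oo u) = fps_deriv u * (witt_bracket f g oo u)"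
  unfolding witt_bracket_def
  by (simp add: fps_compose_deriv fps_compose_sub_distrib fps_compose_mult_distrib algebra_simps)

lemma witt_bracket_cong:
  assumes "agree_below (Suc N) f f'" "agree_below (Suc N) g g'" "f $ 0 = 0" "g $ 0 = 0"
  shows "agree_below (Suc N) (witt_bracket f g) (witt_bracket f' g')"
proof -
  have "agree_below (N + 1) (f * fps_deriv g) (f * fps_deriv g')"
    by (rule agree_below_mult_high_order) (use assms in \<open>auto intro: agree_below_deriv\<close>)
  moreover have "agree_below (N + 1) (g * fps_deriv f) (g * fps_deriv f')"
    by (rule agree_below_mult_high_order) (use assms in \<open>auto intro: agree_below_deriv\<close>)
  moreover have "agree_below (Suc N) (f * fps_deriv g') (f' * fps_deriv g')"
    "agree_below (Suc N) (g * fps_deriv f') (g' * fps_deriv f')"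
    using assms by (auto intro: agree_below_mult_right)
  ultimately show ?thesis unfolding witt_bracket_def
    by (metis Suc_eq_plus1 agree_below_diff agree_below_trans mult.commute)
qed

lemma witt_bracket_compose_nth_less_2:
  assumes "f $ 0 = 0" "g $ 0 = 0" "k < 2"
  shows "(witt_bracket f g oo u) $ k = 0"
proof -
  have "witt_bracket f g $ 0 = 0" "witt_bracket f g $ 1 = 0"
    using assms by (simp_all add: witt_bracket_def fps_mult_nth_1)
  moreover have "k = 0 \<or> k = 1" using assms by auto
  ultimately show ?thesis by (auto simp: fps_compose_nth)
qed

lemma subst_vec_tp_bracket_eq_fps:
  assumes x: "x \<in> vec_carrier n" and y: "y \<in> vec_carrier n" and u0: "u $ 0 = 0"
  shows "subst_vec n u (tp_bracket n a x y)
       = vec_of_fps n ((tp_field a oo u) * (witt_bracket (fps_of_vec x) (fps_of_vec y) oo u))"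
proof -
  have "witt_bracket (fps_of_vec x) (fps_of_vec y) $ 0 = 0"
    using vec_carrier_0[OF x] vec_carrier_0[OF y] by (simp add: witt_bracket_def)
  then show ?thesis
    unfolding tp_bracket_eq_fps[OF x y]
    by (subst subst_vec_of_fps) (simp_all add: fps_compose_mult_distrib[OF u0])
qed

lemma tp_bracket_subst_vec_eq_fps:
  assumes x: "x \<in> vec_carrier n" and y: "y \<in> vec_carrier n" and u0: "u $ 0 = 0"
  shows "tp_bracket n b (subst_vec n u x) (subst_vec n u y)
       = vec_of_fps n
           (tp_field b * fps_deriv u * (witt_bracket (fps_of_vec x) (fps_of_vec y) oo u))"
proof -
  have "agree_below (Suc n)
      (witt_bracket (fps_of_vec (subst_vec n u x)) (fps_of_vec (subst_vec n u y)))
      (witt_bracket (fps_of_vec x oo u) (fps_of_vec y oo u))"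
    using fps_of_subst_vec[OF x] fps_of_subst_vec[OF y]
    by (intro witt_bracket_cong) (simp_all add: vec_carrier_0[OF vec_of_fps_carrier] subst_vec_def)
  then have "agree_below (Suc n)
      (tp_field b * witt_bracket (fps_of_vec (subst_vec n u x)) (fps_of_vec (subst_vec n u y)))
      (tp_field b * fps_deriv u * (witt_bracket (fps_of_vec x) (fps_of_vec y) oo u))"
    by (simp add: agree_below_mult_left witt_bracket_compose[OF u0] mult.assoc)
  then show ?thesis
    unfolding tp_bracket_eq_fps[OF vec_of_fps_carrier vec_of_fps_carrier] subst_vec_def
    by (rule vec_of_fps_cong)
qed

text \<open>\<open>V \<circ> u = W u'\<close> says that the change of coordinate \<open>u\<close> transforms the vector field
  \<open>V \<partial>\<close> into \<open>W \<partial>\<close>; here only modulo \<open>X\<^sup>N\<close>.\<close>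

definition field_equiv :: "nat \<Rightarrow> complex fps \<Rightarrow> complex fps \<Rightarrow> bool" where
  "field_equiv N V W \<longleftrightarrow>
     (\<exists>u. u $ 0 = 0 \<and> u $ 1 \<noteq> 0 \<and> agree_below N (V oo u) (W * fps_deriv u))"

lemma TP_iso_tp_bracket_if_field_equiv:
  assumes "1 \<le> n" "field_equiv (n - 1) (tp_field a) (tp_field b)"
  shows "TP_iso n (mu0 n) (tp_bracket n a) (mu0 n) (tp_bracket n b)"
proof -
  obtain u where u0: "u $ 0 = 0" and u1: "u $ 1 \<noteq> 0"
    and E: "agree_below (n - 1) (tp_field a oo u) (tp_field b * fps_deriv u)"
    using assms(2) unfolding field_equiv_def by blast
  have "subst_vec n u (tp_bracket n a x y) = tp_bracket n b (subst_vec n u x) (subst_vec n u y)"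
    if x: "x \<in> vec_carrier n" and y: "y \<in> vec_carrier n" for x y
  proof -
    \<comment> \<open>the bracket factor has order \<open>\<ge> 2\<close>, which makes up for the truncation at \<open>n - 1\<close>\<close>
    have "agree_below (n - 1 + 2)
        ((witt_bracket (fps_of_vec x) (fps_of_vec y) oo u) * (tp_field a oo u))
        ((witt_bracket (fps_of_vec x) (fps_of_vec y) oo u) * (tp_field b * fps_deriv u))"
      by (rule agree_below_mult_high_order[OF _ E])
        (use witt_bracket_compose_nth_less_2 vec_carrier_0[OF x] vec_carrier_0[OF y] in simp)
    then show ?thesis
      unfolding subst_vec_tp_bracket_eq_fps[OF x y u0] tp_bracket_subst_vec_eq_fps[OF x y u0]
      using assms(1) by (intro vec_of_fps_cong) (simp add: mult_ac)
  qed
  then show ?thesis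
    unfolding TP_iso_def
    using linear_on_subst_vec bij_betw_subst_vec[OF u0 u1] subst_vec_mu0[OF _ _ u0] by blast
qed

lemma fps_X_power_compose: "u $ 0 = 0 \<Longrightarrow> fps_X ^ i oo u = (u::'a::idom fps) ^ i"
  using fps_compose_power[of u fps_X i] by simp

lemma fps_compose_nth_1: "u $ 0 = 0 \<Longrightarrow> (f oo u) $ 1 = f $ 1 * (u $ 1 :: 'a::comm_ring_1)"
  by (simp add: fps_compose_nth)

lemma mu0_hom_basis_vec:
  assumes lin: "linear_on n \<phi>"
    and hom: "\<forall>x\<in>vec_carrier n. \<forall>y\<in>vec_carrier n. \<phi> (mu0 n x y) = mu0 n (\<phi> x) (\<phi> y)"
    and k: "1 \<le> k" "k \<le> n"
  shows "\<phi> (basis_vec n k) = vec_of_fps n (fps_of_vec (\<phi> (basis_vec n 1)) ^ k)"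
  using k
proof (induction k rule: dec_induct)
  case base
  show ?case using vec_of_fps_of_vec[OF linear_on_carrier[OF lin basis_vec_carrier]] by simp
next
  case (step m)
  define u where "u = fps_of_vec (\<phi> (basis_vec n 1))"
  have c: "\<phi> (basis_vec n 1) \<in> vec_carrier n" using linear_on_carrier[OF lin basis_vec_carrier] .
  have IH: "\<phi> (basis_vec n m) = vec_of_fps n (u ^ m)" using step unfolding u_def by simp
  have "\<phi> (basis_vec n (Suc m)) = \<phi> (mu0 n (basis_vec n 1) (basis_vec n m))"
    using mu0_basis_vec[of 1 m n] step by simp
  also have "\<dots> = mu0 n (\<phi> (basis_vec n 1)) (\<phi> (basis_vec n m))"
    using hom basis_vec_carrier by blast
  also have "\<dots> = vec_of_fps n (u * fps_of_vec (vec_of_fps n (u ^ m)))"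
    unfolding IH mu0_eq_fps_mult[OF c vec_of_fps_carrier] u_def ..
  also have "\<dots> = vec_of_fps n (u * u ^ m)"
    by (rule vec_of_fps_cong, rule agree_below_mult_left, rule fps_of_vec_of_fps)
      (use vec_carrier_0[OF c] step in \<open>simp add: u_def zero_power\<close>)
  finally show ?case unfolding u_def by simp
qed

lemma vec_of_fps_sum:
  "vec_of_fps n (\<Sum>i\<in>S. fps_const (c i) * g i) = (\<Sum>i\<in>S. scal (c i) (vec_of_fps n (g i)))"
  by (rule ext) (auto simp: vec_of_fps_def sum_apply scal_apply fps_sum_nth)

lemma mu0_hom_eq_subst_vec:
  assumes lin: "linear_on n \<phi>"
    and hom: "\<forall>x\<in>vec_carrier n. \<forall>y\<in>vec_carrier n. \<phi> (mu0 n x y) = mu0 n (\<phi> x) (\<phi> y)"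
    and x: "x \<in> vec_carrier n"
  shows "\<phi> x = subst_vec n (fps_of_vec (\<phi> (basis_vec n 1))) x"
proof -
  define u where "u = fps_of_vec (\<phi> (basis_vec n 1))"
  have u0: "u $ 0 = 0"
    unfolding u_def using vec_carrier_0[OF linear_on_carrier[OF lin basis_vec_carrier]] by simp
  have "\<phi> x = (\<Sum>i=1..n. scal (x i) (vec_of_fps n (u ^ i)))"
    unfolding linear_on_eq_sum_basis[OF lin x] u_def
    by (intro sum.cong refl, subst mu0_hom_basis_vec[OF lin hom]) auto
  also have "\<dots> = vec_of_fps n (\<Sum>i=1..n. fps_const (x i) * u ^ i)"
    by (simp only: vec_of_fps_sum)
  also have "(\<Sum>i=1..n. fps_const (x i) * u ^ i) = fps_of_vec x oo u"
    unfolding fps_of_vec_eq_sum[OF x] fps_compose_sum_distrib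
    by (simp add: fps_X_power_compose[OF u0] flip: fps_const_mult_apply_left)
  finally show ?thesis unfolding u_def subst_vec_def .
qed

lemma subst_vec_surj_imp_coeff_1:
  assumes "1 \<le> n" "u $ 0 = 0" "basis_vec n 1 \<in> subst_vec n u ` vec_carrier n"
  shows "u $ 1 \<noteq> 0"
proof
  assume "u $ 1 = 0"
  from assms(3) obtain y where "basis_vec n 1 = subst_vec n u y" by (rule imageE)
  then have "subst_vec n u y 1 = basis_vec n 1 1" by simp
  then have "subst_vec n u y 1 = 1" using assms(1) by (simp add: basis_vec_def)
  then have "(fps_of_vec y oo u) $ 1 = 1" using assms(1) by (simp add: subst_vec_def vec_of_fps_def)
  then show False using fps_compose_nth_1[OF assms(2)] \<open>u $ 1 = 0\<close> by simp
qed

lemma agree_below_if_vec_of_fps_eq: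
  assumes "f $ 0 = g $ 0" "vec_of_fps n f = vec_of_fps n g"
  shows "agree_below (Suc n) f g"
  unfolding agree_below_def
proof (intro allI impI)
  fix i assume "i < Suc n"
  then consider "i = 0" | "1 \<le> i \<and> i \<le> n" by linarith
  then show "f $ i = g $ i"
    using assms(1) fun_cong[OF assms(2), of i] by cases (simp_all add: vec_of_fps_def)
qed

lemma field_equiv_if_TP_iso_tp_bracket:
  assumes n: "2 \<le> n" and iso: "TP_iso n (mu0 n) (tp_bracket n a) (mu0 n) (tp_bracket n b)"
  shows "field_equiv (n - 1) (tp_field a) (tp_field b)"
proof -
  obtain \<phi> where lin: "linear_on n \<phi>" and bij: "bij_betw \<phi> (vec_carrier n) (vec_carrier n)"
    and hom: "\<forall>x\<in>vec_carrier n. \<forall>y\<in>vec_carrier n. \<phi> (mu0 n x y) = mu0 n (\<phi> x) (\<phi> y)"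
    and hb: "\<forall>x\<in>vec_carrier n. \<forall>y\<in>vec_carrier n.
               \<phi> (tp_bracket n a x y) = tp_bracket n b (\<phi> x) (\<phi> y)"
    using iso unfolding TP_iso_def by blast
  define u where "u = fps_of_vec (\<phi> (basis_vec n 1))"
  have u0: "u $ 0 = 0"
    unfolding u_def using vec_carrier_0[OF linear_on_carrier[OF lin basis_vec_carrier]] by simp
  have \<phi>: "\<phi> x = subst_vec n u x" if "x \<in> vec_carrier n" for x
    unfolding u_def by (rule mu0_hom_eq_subst_vec[OF lin hom that])
  have "\<phi> ` vec_carrier n = subst_vec n u ` vec_carrier n" by (rule image_cong[OF refl \<phi>])
  then have u1: "u $ 1 \<noteq> 0"
    using subst_vec_surj_imp_coeff_1[OF _ u0, of n] n bij_betw_imp_surj_on[OF bij] by simp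
  \<comment> \<open>compare both sides on \<open>(e\<^sub>1, e\<^sub>2)\<close>, where the bracket factor is \<open>u\<^sup>2\<close>, and cancel it\<close>
  have W: "witt_bracket (fps_of_vec (basis_vec n 1)) (fps_of_vec (basis_vec n 2)) oo u = u\<^sup>2"
    using n witt_bracket_X_power[of 1 2]
    by (simp add: fps_of_basis_vec fps_X_power_compose[OF u0] flip: numeral_2_eq_2)
  have "vec_of_fps n ((tp_field a oo u) * u\<^sup>2)
      = subst_vec n u (tp_bracket n a (basis_vec n 1) (basis_vec n 2))"
    using subst_vec_tp_bracket_eq_fps[OF basis_vec_carrier basis_vec_carrier u0] W by simp
  also have "\<dots> = tp_bracket n b (\<phi> (basis_vec n 1)) (\<phi> (basis_vec n 2))"
    using hb \<phi> by (simp add: tp_bracket_eq_fps)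
  also have "\<dots> = vec_of_fps n (tp_field b * fps_deriv u * u\<^sup>2)"
    using tp_bracket_subst_vec_eq_fps[OF basis_vec_carrier basis_vec_carrier u0] W \<phi> by simp
  finally have "vec_of_fps n ((tp_field a oo u) * u\<^sup>2)
      = vec_of_fps n (tp_field b * fps_deriv u * u\<^sup>2)" .
  then have "agree_below (Suc n) ((tp_field a oo u) * u\<^sup>2) (tp_field b * fps_deriv u * u\<^sup>2)"
    using u0 by (intro agree_below_if_vec_of_fps_eq) simp_all
  then have "agree_below (n - 1 + 2) (u\<^sup>2 * (tp_field a oo u)) (u\<^sup>2 * (tp_field b * fps_deriv u))"
    using n by (simp add: mult_ac)
  then show ?thesis
    unfolding field_equiv_def using u0 u1 agree_below_cancel_square by blast
qed

section \<open>Normal forms of truncated vector fields\<close>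

lemma field_equiv_refl: "field_equiv N V V"
  unfolding field_equiv_def by (rule exI[of _ fps_X]) simp

lemma field_equiv_trans:
  assumes "field_equiv N V W" "field_equiv N W Z"
  shows "field_equiv N V Z"
proof -
  obtain u where u0: "u $ 0 = 0" and u1: "u $ 1 \<noteq> 0"
    and eu: "agree_below N (V oo u) (W * fps_deriv u)"
    using assms(1) unfolding field_equiv_def by blast
  obtain v where v0: "v $ 0 = 0" and v1: "v $ 1 \<noteq> 0"
    and ev: "agree_below N (W oo v) (Z * fps_deriv v)"
    using assms(2) unfolding field_equiv_def by blast
  have "V oo (u oo v) = (V oo u) oo v" by (rule fps_compose_assoc[OF v0 u0])
  moreover have "agree_below N ((V oo u) oo v) ((W oo v) * (fps_deriv u oo v))"
    using agree_below_compose_left[OF eu, of v] by (simp add: fps_compose_mult_distrib[OF v0])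
  moreover have "agree_below N ((W oo v) * (fps_deriv u oo v)) (Z * fps_deriv (u oo v))"
    using agree_below_mult_right[OF ev, of "fps_deriv u oo v"]
    by (simp add: fps_compose_deriv[OF v0] mult_ac)
  ultimately have "agree_below N (V oo (u oo v)) (Z * fps_deriv (u oo v))"
    by (metis agree_below_trans)
  moreover have "(u oo v) $ 1 \<noteq> 0" using fps_compose_nth_1[OF v0, of u] u1 v1 by simp
  ultimately show ?thesis unfolding field_equiv_def using u0 by (intro exI[of _ "u oo v"]) simp
qed

lemma field_equiv_agree_below: "field_equiv N V W \<Longrightarrow> agree_below N W W' \<Longrightarrow> field_equiv N V W'"
  unfolding field_equiv_def by (meson agree_below_mult_right agree_below_trans)

lemma field_equiv_scale:
  assumes "l \<noteq> 0"
  shows "field_equiv N V (Abs_fps (\<lambda>i. l ^ i * V $ i / l))"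
  unfolding field_equiv_def
proof (intro exI conjI)
  have "V oo (fps_const l * fps_X)
      = Abs_fps (\<lambda>i. l ^ i * V $ i / l) * fps_deriv (fps_const l * fps_X)"
    using assms by (simp add: fps_compose_linear fps_eq_iff)
  then show "agree_below N (V oo (fps_const l * fps_X))
      (Abs_fps (\<lambda>i. l ^ i * V $ i / l) * fps_deriv (fps_const l * fps_X))"
    by simp
qed (use assms in simp_all)

lemma one_plus_monom_power_nth:
  assumes "1 \<le> d" "p \<le> d"
  shows "((1 + fps_const c * fps_X ^ d) ^ l) $ p
       = (if p = 0 then 1 else if p = d then of_nat l * c else (0::complex))"
  using assms(2)
proof (induction l arbitrary: p)
  case (Suc l)
  have "((1 + fps_const c * fps_X ^ d) ^ Suc l) $ p
      = ((1 + fps_const c * fps_X ^ d) ^ l) $ p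
        + c * (fps_X ^ d * (1 + fps_const c * fps_X ^ d) ^ l) $ p"
    by (simp add: algebra_simps)
  then show ?case
    unfolding fps_X_power_mult_nth using Suc.IH[of p] Suc.IH[of 0] Suc.prems assms(1)
    by (auto simp: algebra_simps)
qed (use assms in auto)

lemma X_plus_monom_power_nth:
  fixes c :: complex
  assumes k: "2 \<le> k" and "l \<le> i" "i \<le> l + (k - 1)"
  shows "((fps_X + fps_const c * fps_X ^ k) ^ l) $ i
       = (if i = l then 1 else if i = l + (k - 1) then of_nat l * c else 0)"
proof -
  have "fps_X + fps_const c * fps_X ^ k
      = fps_X * (1 + fps_const c * (fps_X :: complex fps) ^ (k - 1))"
    using k by (simp add: algebra_simps flip: power_Suc)
  then have "((fps_X + fps_const c * fps_X ^ k) ^ l) $ i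
      = ((1 + fps_const c * (fps_X :: complex fps) ^ (k - 1)) ^ l) $ (i - l)"
    using assms(2) by (simp add: power_mult_distrib fps_X_power_mult_nth)
  also have "\<dots> = (if i - l = 0 then 1 else if i - l = k - 1 then of_nat l * c else 0)"
    by (rule one_plus_monom_power_nth) (use assms in auto)
  finally show ?thesis using assms by auto
qed

lemma fps_compose_X_plus_monom_nth:
  fixes V :: "complex fps"
  assumes low: "\<And>l. l < m \<Longrightarrow> V $ l = 0" and k: "2 \<le> k" and i: "i \<le> m + (k - 1)"
  shows "(V oo (fps_X + fps_const c * fps_X ^ k)) $ i
       = V $ i + (if i = m + (k - 1) then of_nat m * c * V $ m else 0)"
proof -
  have "V $ l * ((fps_X + fps_const c * fps_X ^ k) ^ l) $ i
      = (if l = i then V $ i else 0)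
        + (if l = m \<and> i = m + (k - 1) then of_nat m * c * V $ m else 0)"
    if "l \<le> i" for l
  proof (cases "l < m")
    case False
    then show ?thesis using X_plus_monom_power_nth[OF k that] i k by auto
  qed (use low k that in auto)
  then have "(V oo (fps_X + fps_const c * fps_X ^ k)) $ i = (\<Sum>l=0..i.
      (if l = i then V $ i else 0) + (if l = m \<and> i = m + (k - 1) then of_nat m * c * V $ m else 0))"
    unfolding fps_compose_nth by (intro sum.cong) auto
  also have "\<dots> = V $ i + (if i = m + (k - 1) then of_nat m * c * V $ m else 0)"
    using k by (simp add: sum.distrib)
  finally show ?thesis .
qed

lemma fps_mult_one_plus_monom_eq:
  fixes W G :: "complex fps"
  assumes WG: "W * (1 + fps_const d * fps_X ^ p) = G" and "1 \<le> p" and low: "\<And>l. l < m \<Longrightarrow> G $ l = 0"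
  shows "i < m + p \<Longrightarrow> W $ i = G $ i" and "W $ (m + p) = G $ (m + p) - d * G $ m"
proof -
  have "G = W + fps_const d * (W * fps_X ^ p)"
    using WG by (simp add: distrib_left mult.left_commute)
  then have rec: "W $ i = G $ i - (if p \<le> i then d * W $ (i - p) else 0)" for i
    by (simp add: fps_X_power_mult_right_nth)
  show lowW: "W $ i = G $ i" if "i < m + p" for i
    using that
  proof (induction i rule: less_induct)
    case (less i)
    have "W $ (i - p) = 0" if "p \<le> i"
      using that less.IH[of "i - p"] less.prems low[of "i - p"] \<open>1 \<le> p\<close> by auto
    then show ?case using rec[of i] by auto
  qed
  show "W $ (m + p) = G $ (m + p) - d * G $ m"
    using rec[of "m + p"] lowW[of m] \<open>1 \<le> p\<close> by simp
qed

text \<open>The change of coordinate \<open>X + c X\<^sup>k\<close> with \<open>k = j - m + 1\<close> alters the coefficient of \<open>X\<^sup>j\<close>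
  by \<open>(m - k) c V\<^sub>m\<close> and nothing below it; this fails exactly for \<open>j = 2m - 1\<close>.\<close>

lemma field_equiv_kill_coeff:
  fixes V :: "complex fps"
  assumes low: "\<And>l. l < m \<Longrightarrow> V $ l = 0" and Vm: "V $ m \<noteq> 0" and mj: "m < j" and km: "j - m + 1 \<noteq> m"
  shows "\<exists>W. field_equiv N V W \<and> (\<forall>i<j. W $ i = V $ i) \<and> W $ j = 0"
proof -
  define k where "k = j - m + 1"
  have k2: "2 \<le> k" and jk: "j = m + (k - 1)" using mj by (auto simp: k_def)
  have mk: "(of_nat m - of_nat k :: complex) \<noteq> 0"
    using km unfolding k_def by (simp only: right_minus_eq of_nat_eq_iff)
  define c where "c = - V $ j / (V $ m * (of_nat m - of_nat k))"
  define u where "u = fps_X + fps_const c * fps_X ^ k"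
  have u0: "u $ 0 = 0" and u1: "u $ 1 = 1" using k2 by (auto simp: u_def)
  have du: "fps_deriv u = 1 + fps_const (c * of_nat k) * fps_X ^ (k - 1)"
    unfolding u_def by (simp add: fps_deriv_power algebra_simps)
  define W where "W = (V oo u) * inverse (fps_deriv u)"
  have WG: "W * fps_deriv u = V oo u"
    unfolding W_def using k2 by (simp add: du mult.assoc inverse_mult_eq_1)
  have G: "(V oo u) $ i = V $ i + (if i = j then of_nat m * c * V $ m else 0)" if "i \<le> j" for i
    unfolding u_def using fps_compose_X_plus_monom_nth[OF low k2, where i = i and c = c] that jk
      by simp
  have lowG: "\<And>l. l < m \<Longrightarrow> (V oo u) $ l = 0" using G low mj by simp
  have "1 \<le> k - 1" using k2 by simp
  note W = fps_mult_one_plus_monom_eq[where m = m, OF WG[unfolded du] this lowG]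
  have "W $ i = V $ i" if "i < j" for i using W(1)[of i] G[of i] that jk k2 by simp
  moreover have "W $ j = V $ j + c * (of_nat m - of_nat k) * V $ m"
    using W(2) G[of j] G[of m] jk k2 mj by (simp add: algebra_simps)
  then have "W $ j = 0" unfolding c_def using Vm mk by (simp add: field_simps)
  moreover have "field_equiv N V W"
    unfolding field_equiv_def using u0 u1 WG by (intro exI[of _ u]) simp
  ultimately show ?thesis by blast
qed

lemma field_equiv_kill_coeffs:
  fixes V :: "complex fps"
  assumes low: "\<And>l. l < m \<Longrightarrow> V $ l = 0" and Vm: "V $ m \<noteq> 0"
  shows "m < j \<Longrightarrow> \<exists>W. field_equiv N V W \<and> W $ m = V $ m \<and>
           (\<forall>i<j. i \<noteq> m \<longrightarrow> i \<noteq> 2 * m - 1 \<longrightarrow> W $ i = 0)"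
proof (induction j)
  case (Suc j)
  show ?case
  proof (cases "j = m")
    case True
    then show ?thesis using low by (intro exI[of _ V]) (auto simp: field_equiv_refl)
  next
    case False
    then have mj: "m < j" using Suc.prems by simp
    obtain W where R: "field_equiv N V W" and Wm: "W $ m = V $ m"
      and Wz: "\<forall>i<j. i \<noteq> m \<longrightarrow> i \<noteq> 2 * m - 1 \<longrightarrow> W $ i = 0"
      using Suc.IH[OF mj] by blast
    show ?thesis
    proof (cases "j = 2 * m - 1")
      case True
      then show ?thesis using R Wm Wz by (intro exI[of _ W]) (auto simp: less_Suc_eq)
    next
      case False
      have "W $ l = 0" if "l < m" for l using Wz that mj by auto
      moreover have "j - m + 1 \<noteq> m" using False mj by auto
      ultimately obtain W' where "field_equiv N W W'" "\<forall>i<j. W' $ i = W $ i" "W' $ j = 0"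
        using field_equiv_kill_coeff[of m W j N] Wm Vm mj by auto
      then show ?thesis
        using field_equiv_trans[OF R] Wm Wz mj by (intro exI[of _ W']) (auto simp: less_Suc_eq)
    qed
  qed
qed simp

lemma complex_nth_root_exists:
  assumes "1 \<le> d" "(c::complex) \<noteq> 0"
  shows "\<exists>z. z ^ d = c"
proof -
  have "(\<lambda>z. root d (norm c) * cis (Arg c / d) * z) ` {z. z ^ d = 1} = {z. z ^ d = c}"
    using bij_betw_nth_root_unity[of c d] assms by (simp add: bij_betw_def)
  then show ?thesis by (metis (mono_tags) imageI mem_Collect_eq power_one)
qed

definition param_unit :: "nat \<Rightarrow> complex" where
  "param_unit = (\<lambda>k. if k = 2 then 1 else 0)"

definition param_linear :: "complex \<Rightarrow> nat \<Rightarrow> complex" where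
  "param_linear a = (\<lambda>k. if k = 3 then a else 0)"

definition param_order :: "nat \<Rightarrow> nat \<Rightarrow> complex \<Rightarrow> nat \<Rightarrow> complex" where
  "param_order n s a = (\<lambda>k. if k = s then 1 else if k = 2 * s - 3 \<and> 2 * s - 3 \<le> n then a else 0)"

lemma TP_params_eq:
  "TP_params n = {param_unit} \<union> range param_linear \<union> {param_order n s a | s a. 4 \<le> s \<and> s \<le> n}"
  unfolding TP_params_def param_unit_def param_linear_def param_order_def by auto

lemma field_equiv_normal_form_order:
  assumes m: "2 \<le> m" "m + 1 < n" and Wm: "W $ m \<noteq> 0"
    and Wz: "\<forall>i<n - 1. i \<noteq> m \<longrightarrow> i \<noteq> 2 * m - 1 \<longrightarrow> W $ i = 0"
  shows "\<exists>c. field_equiv (n - 1) W (tp_field (param_order n (m + 2) c))"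
proof -
  have "1 \<le> m - 1" using m by simp
  then obtain l where l: "l ^ (m - 1) = 1 / W $ m"
    using complex_nth_root_exists[of "m - 1" "1 / W $ m"] Wm by auto
  have l0: "l \<noteq> 0"
  proof
    assume "l = 0"
    then have "1 / W $ m = 0" using l \<open>1 \<le> m - 1\<close> by (simp add: zero_power)
    then show False using Wm by simp
  qed
  have "l ^ m = l ^ (m - 1) * l" using m by (simp flip: power_Suc2)
  then have lm: "l ^ m * W $ m / l = 1" using l l0 Wm by simp
  define c where "c = l ^ (2 * m - 1) * W $ (2 * m - 1) / l"
  have "agree_below (n - 1) (Abs_fps (\<lambda>i. l ^ i * W $ i / l)) (tp_field (param_order n (m + 2) c))"
    unfolding agree_below_def
  proof (intro allI impI)
    fix i assume i: "i < n - 1"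
    consider "i = m" | "i = 2 * m - 1" | "i \<noteq> m" "i \<noteq> 2 * m - 1" by blast
    then show "Abs_fps (\<lambda>i. l ^ i * W $ i / l) $ i = tp_field (param_order n (m + 2) c) $ i"
    proof cases
      case 2
      then have "2 * (m + 2) - 3 \<le> n" "i + 2 = 2 * (m + 2) - 3" "i + 2 \<noteq> m + 2" using i m by auto
      then show ?thesis using 2 by (simp add: param_order_def c_def)
    qed (use lm Wz i m in \<open>auto simp: param_order_def\<close>)
  qed
  then show ?thesis using field_equiv_agree_below[OF field_equiv_scale[OF l0]] by blast
qed

lemma field_equiv_normal_form: "\<exists>\<beta>\<in>TP_params n. field_equiv (n - 1) V (tp_field \<beta>)"
proof (cases "\<forall>i<n - 1. V $ i = 0")
  case True
  then have "agree_below (n - 1) V (tp_field (param_linear 0))"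
    by (simp add: agree_below_def param_linear_def)
  then have "field_equiv (n - 1) V (tp_field (param_linear 0))"
    by (rule field_equiv_agree_below[OF field_equiv_refl])
  then show ?thesis by (auto simp: TP_params_eq)
next
  case False
  define m where "m = (LEAST i. i < n - 1 \<and> V $ i \<noteq> 0)"
  have "m < n - 1 \<and> V $ m \<noteq> 0"
    unfolding m_def by (rule LeastI_ex) (use False in blast)
  then have m: "m < n - 1" "V $ m \<noteq> 0" by auto
  have low: "V $ l = 0" if "l < m" for l
    using not_less_Least[of l "\<lambda>i. i < n - 1 \<and> V $ i \<noteq> 0"] that m unfolding m_def by auto
  obtain W where R: "field_equiv (n - 1) V W" and Wm: "W $ m = V $ m"
    and Wz: "\<forall>i<n - 1. i \<noteq> m \<longrightarrow> i \<noteq> 2 * m - 1 \<longrightarrow> W $ i = 0"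
    using field_equiv_kill_coeffs[OF low m(2) m(1)] by blast
  consider "m = 0" | "m = 1" | "2 \<le> m" by linarith
  then show ?thesis
  proof cases
    case 1
    have W0: "W $ 0 \<noteq> 0" using Wm m 1 by simp
    have "agree_below (n - 1) (Abs_fps (\<lambda>i. (W $ 0) ^ i * W $ i / W $ 0)) (tp_field param_unit)"
      unfolding agree_below_def
    proof (intro allI impI)
      fix i assume "i < n - 1"
      then show "Abs_fps (\<lambda>i. (W $ 0) ^ i * W $ i / W $ 0) $ i = tp_field param_unit $ i"
        using Wz W0 \<open>m = 0\<close> by (cases "i = 0") (simp_all add: param_unit_def)
    qed
    then have "field_equiv (n - 1) V (tp_field param_unit)"
      using field_equiv_trans[OF R field_equiv_scale[OF W0]] field_equiv_agree_below by blast
    then show ?thesis by (auto simp: TP_params_eq)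
  next
    case 2
    have "agree_below (n - 1) W (tp_field (param_linear (W $ 1)))"
      using Wz 2 by (auto simp: agree_below_def param_linear_def)
    then have "field_equiv (n - 1) V (tp_field (param_linear (W $ 1)))"
      by (rule field_equiv_agree_below[OF R])
    then show ?thesis by (auto simp: TP_params_eq)
  next
    case 3
    have "m + 1 < n" "W $ m \<noteq> 0" using m Wm by simp_all
    then obtain c where "field_equiv (n - 1) W (tp_field (param_order n (m + 2) c))"
      using field_equiv_normal_form_order[OF 3 _ _ Wz] by blast
    moreover have "param_order n (m + 2) c \<in> TP_params n" using 3 m by (auto simp: TP_params_eq)
    ultimately show ?thesis using field_equiv_trans[OF R] by blast
  qed
qed

section \<open>Invariants of truncated vector fields\<close>

lemma fps_power_nth_self:
  fixes u :: "'a::comm_ring_1 fps"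
  assumes "u $ 0 = 0"
  shows "(u ^ i) $ i = (u $ 1) ^ i"
  by (subst fps_eq_X_mult_shift[OF assms])
    (simp add: power_mult_distrib fps_X_power_mult_nth fps_power_zeroth)

lemma fps_compose_nth_order:
  fixes V u :: "'a::comm_ring_1 fps"
  assumes "u $ 0 = 0" "\<forall>l<i. V $ l = 0"
  shows "(V oo u) $ i = V $ i * (u $ 1) ^ i"
proof -
  have "(V oo u) $ i = (\<Sum>l=0..i. if l = i then V $ i * (u $ 1) ^ i else 0)"
    unfolding fps_compose_nth using assms by (intro sum.cong) (auto simp: fps_power_nth_self)
  then show ?thesis by simp
qed

lemma fps_mult_nth_order:
  fixes W f :: "'a::comm_ring_1 fps"
  assumes "\<forall>l<i. W $ l = 0"
  shows "(W * f) $ i = W $ i * f $ 0"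
proof -
  have "(W * f) $ i = (\<Sum>p=0..i. if p = i then W $ i * f $ 0 else 0)"
    unfolding fps_mult_nth using assms by (intro sum.cong) auto
  then show ?thesis by simp
qed

text \<open>Comparing lowest coefficients in \<open>V \<circ> u = W u'\<close>: \<open>V\<^sub>i u\<^sub>1\<^sup>i = W\<^sub>i u\<^sub>1\<close>.\<close>

lemma agree_below_compose_vanish_below_iff:
  fixes V W u :: "complex fps"
  assumes u0: "u $ 0 = 0" and u1: "u $ 1 \<noteq> 0" and E: "agree_below N (V oo u) (W * fps_deriv u)"
  shows "i \<le> N \<Longrightarrow> (\<forall>l<i. V $ l = 0) \<longleftrightarrow> (\<forall>l<i. W $ l = 0)"
proof (induction i)
  case (Suc i)
  then have IH: "(\<forall>l<i. V $ l = 0) \<longleftrightarrow> (\<forall>l<i. W $ l = 0)" and "i < N" by auto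
  then have eq: "(V oo u) $ i = (W * fps_deriv u) $ i" using E by (simp add: agree_below_def)
  show ?case
  proof (cases "\<forall>l<i. V $ l = 0")
    case True
    then have "V $ i * (u $ 1) ^ i = W $ i * u $ 1"
      using eq IH fps_compose_nth_order[OF u0 True] fps_mult_nth_order[of i W] by simp
    then show ?thesis using True IH u1 by (auto simp: less_Suc_eq)
  qed (use IH in \<open>auto simp: less_Suc_eq\<close>)
qed simp

lemma agree_below_compose_lowest_coeff:
  fixes V W u :: "complex fps"
  assumes u0: "u $ 0 = 0" and u1: "u $ 1 \<noteq> 0" and E: "agree_below N (V oo u) (W * fps_deriv u)"
    and "i < N" and low: "\<forall>l<i. V $ l = 0"
  shows "V $ i * (u $ 1) ^ i = W $ i * u $ 1"
proof -
  have "\<forall>l<i. W $ l = 0" using agree_below_compose_vanish_below_iff[OF u0 u1 E, of i] assms(4) low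
    by simp
  moreover have "(V oo u) $ i = (W * fps_deriv u) $ i" using E assms(4)
    by (simp add: agree_below_def)
  ultimately show ?thesis
    using fps_compose_nth_order[OF u0 low] fps_mult_nth_order[of i W "fps_deriv u"]
    by simp
qed

definition vanishing_order :: "nat \<Rightarrow> 'a::zero fps \<Rightarrow> nat" where
  "vanishing_order N V = (LEAST i. i = N \<or> V $ i \<noteq> 0)"

lemma vanishing_order_eqI:
  assumes "i \<le> N" "i = N \<or> V $ i \<noteq> 0" "\<forall>l<i. V $ l = 0"
  shows "vanishing_order N V = i"
  unfolding vanishing_order_def
  by (rule Least_equality) (use assms in \<open>auto simp: not_less[symmetric]\<close>)

lemma vanishing_order_le: "vanishing_order N V \<le> N"
  unfolding vanishing_order_def by (rule Least_le) simp

lemma vanishing_order_props: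
  "vanishing_order N V = N \<or> V $ vanishing_order N V \<noteq> 0" "\<forall>l<vanishing_order N V. V $ l = 0"
  unfolding vanishing_order_def using LeastI[of "\<lambda>i. i = N \<or> V $ i \<noteq> 0" N]
  by (auto dest: not_less_Least)

lemma field_equiv_vanishing_order:
  assumes "field_equiv N V W"
  shows "vanishing_order N V = vanishing_order N W"
proof -
  obtain u where u0: "u $ 0 = 0" and u1: "u $ 1 \<noteq> 0"
    and E: "agree_below N (V oo u) (W * fps_deriv u)"
    using assms unfolding field_equiv_def by blast
  note iff = agree_below_compose_vanish_below_iff[OF u0 u1 E]
  define i where "i = vanishing_order N V"
  have "i \<le> N" "i = N \<or> V $ i \<noteq> 0" "\<forall>l<i. V $ l = 0"
    unfolding i_def using vanishing_order_le vanishing_order_props by blast+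
  then have "i = N \<or> W $ i \<noteq> 0" "\<forall>l<i. W $ l = 0"
    using iff[of i] iff[of "Suc i"] by (auto simp: less_Suc_eq)
  then show ?thesis unfolding i_def[symmetric] using \<open>i \<le> N\<close>
    by (intro vanishing_order_eqI[symmetric])
qed

lemma one_plus_power_nth:
  fixes g :: "complex fps"
  assumes g: "\<forall>q<p. g $ q = 0" and "1 \<le> p" and "i < 2 * p"
  shows "((1 + g) ^ m) $ i = (if i = 0 then 1 else of_nat m * g $ i)"
  using assms(3)
proof (induction m arbitrary: i)
  case (Suc m)
  have "(g * (1 + g) ^ m) $ i = (\<Sum>q=0..i. if q = i then g $ i else 0)"
    unfolding fps_mult_nth
  proof (intro sum.cong refl)
    fix q assume q: "q \<in> {0..i}"
    show "g $ q * ((1 + g) ^ m) $ (i - q) = (if q = i then g $ i else 0)"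
    proof (cases "q < p")
      case False
      then have "i - q < 2 * p" "i - q < p" using Suc.prems q by auto
      then show ?thesis using Suc.IH[of "i - q"] g q by auto
    qed (use g in auto)
  qed
  moreover have "((1 + g) ^ Suc m) $ i = ((1 + g) ^ m) $ i + (g * (1 + g) ^ m) $ i"
    by (simp add: algebra_simps)
  moreover have "g $ 0 = 0" using g assms(2) by auto
  ultimately show ?case using Suc.IH[OF Suc.prems] by (auto simp: algebra_simps)
qed simp

lemma residue_coeff_eq:
  fixes w :: "complex fps"
  assumes m: "2 \<le> m" and l: "l \<noteq> 0" "w $ 0 = l" "l ^ m = l"
    and coef: "\<And>i. i < m \<Longrightarrow> (w ^ m) $ i + a * (if i = m - 1 then l ^ (2 * m - 1) else 0)
                          = of_nat (i + 1) * w $ i + b * (if i = m - 1 then l else 0)"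
  shows "a = b"
proof -
  define g where "g = Abs_fps (\<lambda>i. if i = 0 then 0 else w $ i / l)"
  have "w = fps_const l * (1 + g)"
    by (rule fps_ext) (use l in \<open>auto simp: g_def\<close>)
  then have wm: "(w ^ m) $ i = l * ((1 + g) ^ m) $ i" for i
    by (simp add: power_mult_distrib fps_const_power l(3))
  have wi: "w $ i = l * g $ i" if "0 < i" for i using that l by (simp add: g_def)
  have G: "g $ q = 0" if "q < m - 1" for q
    using that
  proof (induction q rule: less_induct)
    case (less q)
    show ?case
    proof (cases "q = 0")
      case False
      have "((1 + g) ^ m) $ q = of_nat m * g $ q"
        using one_plus_power_nth[of q g q m] less False by simp
      then have "l * (of_nat m * g $ q) = l * (of_nat (q + 1) * g $ q)"
        using coef[of q] less.prems wm[of q] wi[of q] False by (simp add: mult.left_commute)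
      then have "(of_nat m - of_nat (q + 1)) * g $ q = 0" using l by (simp add: left_diff_distrib)
      moreover have "(of_nat m - of_nat (q + 1) :: complex) \<noteq> 0"
        using less.prems by (simp only: right_minus_eq of_nat_eq_iff)
      ultimately show ?thesis by simp
    qed (simp add: g_def)
  qed
  have "((1 + g) ^ m) $ (m - 1) = of_nat m * g $ (m - 1)"
    using one_plus_power_nth[of "m - 1" g "m - 1" m] G m by simp
  then have "a * l ^ (2 * m - 1) = b * l"
    using coef[of "m - 1"] wm[of "m - 1"] wi[of "m - 1"] m by (simp add: algebra_simps)
  moreover have "l ^ (2 * m - 1) = l"
  proof -
    have "l ^ m = l ^ (m - 1) * l" using m by (simp flip: power_Suc2)
    then have "l ^ (m - 1) = 1" using l by simp
    moreover have "l ^ (2 * m - 1) = l ^ (m - 1) * l ^ m" using m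
      by (simp add: mult_2 flip: power_add)
    ultimately show ?thesis using l by simp
  qed
  ultimately show ?thesis using l by simp
qed

text \<open>For \<open>V = X\<^sup>m + a X\<^sup>2\<^sup>m\<^sup>-\<^sup>1 + \<dots>\<close> the number \<open>-a\<close> is the residue of the form \<open>dX / V\<close>,
  which a change of coordinate cannot alter; here this is checked on coefficients.\<close>

lemma agree_below_compose_residue:
  fixes V W u :: "complex fps"
  assumes m: "2 \<le> m" and N: "2 * m \<le> N" and u0: "u $ 0 = 0" and u1: "u $ 1 \<noteq> 0"
    and E: "agree_below N (V oo u) (W * fps_deriv u)"
    and V: "agree_below (2 * m) V (fps_X ^ m + fps_const a * fps_X ^ (2 * m - 1))"
    and W: "agree_below (2 * m) W (fps_X ^ m + fps_const b * fps_X ^ (2 * m - 1))"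
  shows "a = b"
proof -
  define l where "l = u $ 1"
  define w where "w = fps_shift 1 u"
  have uw: "u = fps_X * w" unfolding w_def using u0 by (rule fps_eq_X_mult_shift)
  have w0: "w $ 0 = l" unfolding w_def l_def by simp
  have Vm: "V $ m = 1" "W $ m = 1" and lowV: "\<forall>j<m. V $ j = 0"
    using V W m by (auto simp: agree_below_def fps_X_power_nth)
  have lm: "l ^ m = l"
    using agree_below_compose_lowest_coeff[OF u0 u1 E _ lowV] N m Vm unfolding l_def by simp
  have E': "agree_below (2 * m) ((fps_X ^ m + fps_const a * fps_X ^ (2 * m - 1)) oo u)
       ((fps_X ^ m + fps_const b * fps_X ^ (2 * m - 1)) * fps_deriv u)"
  proof -
    have VW: "agree_below (2 * m) (V oo u) (W * fps_deriv u)" using agree_below_mono[OF E N] .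
    have V':  "agree_below (2 * m) ((fps_X ^ m + fps_const a * fps_X ^ (2 * m - 1)) oo u) (V oo u)"
      by (rule agree_below_compose_left, rule agree_below_sym) (fact V)
    have W': "agree_below (2 * m) (W * fps_deriv u)
        ((fps_X ^ m + fps_const b * fps_X ^ (2 * m - 1)) * fps_deriv u)"
      by (rule agree_below_mult_right) (fact W)
    show ?thesis using agree_below_trans[OF agree_below_trans[OF V' VW] W'] .
  qed
  have L: "(fps_X ^ m + fps_const a * fps_X ^ (2 * m - 1)) oo u
      = fps_X ^ m * (w ^ m + fps_const a * (fps_X ^ (m - 1) * w ^ (2 * m - 1)))"
  proof -
    have "(fps_X ^ m + fps_const a * fps_X ^ (2 * m - 1)) oo u
        = u ^ m + fps_const a * u ^ (2 * m - 1)"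
      by (simp add: fps_compose_add_distrib fps_X_power_compose[OF u0]
          flip: fps_const_mult_apply_left)
    also have "\<dots> = fps_X ^ m * w ^ m + fps_const a * (fps_X ^ (m + (m - 1)) * w ^ (2 * m - 1))"
      unfolding uw power_mult_distrib using m by (simp add: mult_2)
    finally show ?thesis by (simp add: power_add algebra_simps)
  qed
  have R: "(fps_X ^ m + fps_const b * fps_X ^ (2 * m - 1)) * fps_deriv u
      = fps_X ^ m * ((1 + fps_const b * fps_X ^ (m - 1)) * fps_deriv u)"
  proof -
    have "fps_X ^ (2 * m - 1) = fps_X ^ m * (fps_X :: complex fps) ^ (m - 1)"
      using m by (simp add: mult_2 flip: power_add)
    then show ?thesis by (simp add: algebra_simps)
  qed
  have E'': "agree_below m (w ^ m + fps_const a * (fps_X ^ (m - 1) * w ^ (2 * m - 1)))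
      ((1 + fps_const b * fps_X ^ (m - 1)) * fps_deriv u)"
    by (rule agree_below_cancel_X_power[where d = m]) (use E'[unfolded L R] in \<open>simp only: mult_2\<close>)
  show ?thesis
  proof (rule residue_coeff_eq[OF m _ w0 lm])
    show "l \<noteq> 0" using u1 l_def by simp
    fix i assume i: "i < m"
    have e: "(w ^ m + fps_const a * (fps_X ^ (m - 1) * w ^ (2 * m - 1))) $ i
        = ((1 + fps_const b * fps_X ^ (m - 1)) * fps_deriv u) $ i"
      using E'' i by (simp add: agree_below_def)
    have "(w ^ m + fps_const a * (fps_X ^ (m - 1) * w ^ (2 * m - 1))) $ i
        = (w ^ m) $ i + a * (fps_X ^ (m - 1) * w ^ (2 * m - 1)) $ i"
      "((1 + fps_const b * fps_X ^ (m - 1)) * fps_deriv u) $ i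
        = fps_deriv u $ i + b * (fps_X ^ (m - 1) * fps_deriv u) $ i"
      by (simp_all add: algebra_simps)
    moreover have "(fps_X ^ (m - 1) * w ^ (2 * m - 1)) $ i
        = (if i = m - 1 then l ^ (2 * m - 1) else 0)"
      using i by (auto simp: fps_X_power_mult_nth fps_power_zeroth w0)
    moreover have "(fps_X ^ (m - 1) * fps_deriv u) $ i = (if i = m - 1 then l else 0)"
      using i by (auto simp: fps_X_power_mult_nth l_def)
    moreover have "fps_deriv u $ i = of_nat (i + 1) * w $ i" by (simp add: w_def)
    ultimately show "(w ^ m) $ i + a * (if i = m - 1 then l ^ (2 * m - 1) else 0)
        = of_nat (i + 1) * w $ i + b * (if i = m - 1 then l else 0)"
      using e by (simp only:)
  qed
qed

lemma vanishing_order_param_unit: "1 \<le> N \<Longrightarrow> vanishing_order N (tp_field param_unit) = 0"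
  by (rule vanishing_order_eqI) (auto simp: param_unit_def)

lemma vanishing_order_param_linear:
  "2 \<le> N \<Longrightarrow> vanishing_order N (tp_field (param_linear a)) = (if a = 0 then N else 1)"
  by (rule vanishing_order_eqI) (auto simp: param_linear_def)

lemma vanishing_order_param_order:
  "4 \<le> s \<Longrightarrow> s \<le> N + 1 \<Longrightarrow> vanishing_order N (tp_field (param_order n s a)) = s - 2"
  by (rule vanishing_order_eqI) (auto simp: param_order_def)

lemma tp_field_param_order_agree_below:
  assumes "4 \<le> s" "2 * s - 3 \<le> n"
  shows "agree_below (2 * (s - 2)) (tp_field (param_order n s a))
           (fps_X ^ (s - 2) + fps_const a * fps_X ^ (2 * (s - 2) - 1))"
  using assms by (auto simp: agree_below_def param_order_def fps_X_power_nth)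

lemma TP_params_field_equiv_eq:
  assumes n: "5 \<le> n" and \<alpha>: "\<alpha> \<in> TP_params n" and \<beta>: "\<beta> \<in> TP_params n"
    and equiv: "field_equiv (n - 1) (tp_field \<alpha>) (tp_field \<beta>)"
  shows "\<alpha> = \<beta>"
proof -
  obtain u where u0: "u $ 0 = 0" and u1: "u $ 1 \<noteq> 0"
    and E: "agree_below (n - 1) (tp_field \<alpha> oo u) (tp_field \<beta> * fps_deriv u)"
    using equiv unfolding field_equiv_def by blast
  have ord: "vanishing_order (n - 1) (tp_field \<alpha>) = vanishing_order (n - 1) (tp_field \<beta>)"
    by (rule field_equiv_vanishing_order[OF equiv])
  note ord_simps =
    vanishing_order_param_unit vanishing_order_param_linear vanishing_order_param_order
  have \<beta>_cases: "\<beta> = param_unit \<or> (\<exists>b. \<beta> = param_linear b)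
      \<or> (\<exists>s b. \<beta> = param_order n s b \<and> 4 \<le> s \<and> s \<le> n)"
    using \<beta> unfolding TP_params_eq by blast
  consider "\<alpha> = param_unit" | a where "\<alpha> = param_linear a"
    | s a where "\<alpha> = param_order n s a" "4 \<le> s" "s \<le> n"
    using \<alpha> unfolding TP_params_eq by blast
  then show ?thesis
  proof cases
    case 1
    then show ?thesis using \<beta>_cases ord n by (auto simp: ord_simps split: if_splits)
  next
    case (2 a)
    then obtain b where \<beta>_eq: "\<beta> = param_linear b"
      using \<beta>_cases ord n by (auto simp: ord_simps split: if_splits)
    have "tp_field \<alpha> $ 1 * (u $ 1) ^ 1 = tp_field \<beta> $ 1 * u $ 1"
      by (rule agree_below_compose_lowest_coeff[OF u0 u1 E])
        (use n 2 in \<open>simp_all add: param_linear_def\<close>)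
    then have "a = b" using u1 2 \<beta>_eq by (simp add: param_linear_def)
    then show ?thesis using 2 \<beta>_eq by simp
  next
    case (3 s a)
    then obtain s' b where \<beta>': "\<beta> = param_order n s' b" "4 \<le> s'" "s' \<le> n"
      using \<beta>_cases ord n by (auto simp: ord_simps split: if_splits)
    moreover have "s' = s" using ord n 3 \<beta>' by (simp add: ord_simps)
    ultimately have \<beta>_eq: "\<beta> = param_order n s b" by simp
    show ?thesis
    proof (cases "2 * s - 3 \<le> n")
      case True
      have "a = b"
      proof (rule agree_below_compose_residue[OF _ _ u0 u1 E])
        show "agree_below (2 * (s - 2)) (tp_field \<alpha>)
            (fps_X ^ (s - 2) + fps_const a * fps_X ^ (2 * (s - 2) - 1))"
          unfolding 3 by (rule tp_field_param_order_agree_below) (use True 3 in auto)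
        show "agree_below (2 * (s - 2)) (tp_field \<beta>)
            (fps_X ^ (s - 2) + fps_const b * fps_X ^ (2 * (s - 2) - 1))"
          unfolding \<beta>_eq by (rule tp_field_param_order_agree_below) (use True 3 in auto)
      qed (use True 3 in auto)
      then show ?thesis using 3 \<beta>_eq by simp
    qed (use 3 \<beta>_eq in \<open>auto simp: param_order_def fun_eq_iff\<close>)
  qed
qed

lemma TP_iso_cong_left:
  assumes "\<And>x y. x \<in> vec_carrier n \<Longrightarrow> y \<in> vec_carrier n \<Longrightarrow> b x y = b' x y"
  shows "TP_iso n m b m2 b2 \<longleftrightarrow> TP_iso n m b' m2 b2"
  unfolding TP_iso_def using assms by auto

theorem mainTheorem2:
  fixes n :: nat
    and br :: "(nat \<Rightarrow> complex) \<Rightarrow> (nat \<Rightarrow> complex) \<Rightarrow> (nat \<Rightarrow> complex)"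
  assumes "n \<ge> 5"
    and "is_TP n (mu0 n) br"
  shows "(\<exists>\<alpha>\<in>TP_params n. TP_iso n (mu0 n) br (mu0 n) (tp_bracket n \<alpha>))
       \<and> (\<forall>\<alpha>\<in>TP_params n. \<forall>\<beta>\<in>TP_params n. \<alpha> \<noteq> \<beta> \<longrightarrow>
            \<not> TP_iso n (mu0 n) (tp_bracket n \<alpha>) (mu0 n) (tp_bracket n \<beta>))"
proof (intro conjI ballI impI notI)
  have n: "2 \<le> n" using assms(1) by simp
  define a where "a = br (basis_vec n 1) (basis_vec n 2)"
  obtain \<beta> where \<beta>: "\<beta> \<in> TP_params n" and "field_equiv (n - 1) (tp_field a) (tp_field \<beta>)"
    using field_equiv_normal_form by blast
  then have "TP_iso n (mu0 n) (tp_bracket n a) (mu0 n) (tp_bracket n \<beta>)"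
    using n by (intro TP_iso_tp_bracket_if_field_equiv) simp_all
  moreover have "br x y = tp_bracket n a x y" if "x \<in> vec_carrier n" "y \<in> vec_carrier n" for x y
    unfolding a_def using is_TP_mu0_eq_tp_bracket[OF assms(2) n that] .
  ultimately show "\<exists>\<alpha>\<in>TP_params n. TP_iso n (mu0 n) br (mu0 n) (tp_bracket n \<alpha>)"
    using \<beta> TP_iso_cong_left[of n br "tp_bracket n a"] by blast
next
  fix \<alpha> \<beta> assume "\<alpha> \<in> TP_params n" "\<beta> \<in> TP_params n" "\<alpha> \<noteq> \<beta>"
    and "TP_iso n (mu0 n) (tp_bracket n \<alpha>) (mu0 n) (tp_bracket n \<beta>)"
  then have "field_equiv (n - 1) (tp_field \<alpha>) (tp_field \<beta>)"
    using assms(1) by (intro field_equiv_if_TP_iso_tp_bracket) simp_all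
  then show False
    using TP_params_field_equiv_eq[OF assms(1)] \<open>\<alpha> \<in> TP_params n\<close> \<open>\<beta> \<in> TP_params n\<close> \<open>\<alpha> \<noteq> \<beta>\<close>
    by blast
qed

end
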